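(* Let $G$ be a finite non-abelian group with center $Z(G)$. Then: (1) if $G/Z(G)\cong\mathbb{Z}_p\times\mathbb{Z}_p$ for a prime $p$, or $G\cong U_{6m}$ ($m\ge2$), then $\Gamma_G$ is integral, L-integral and Q-integral; (2) if $G\cong D_{2m}$ ($m\ge3$), $T_{4m}$ ($m\ge2$), $SD_{8m}$ ($m\ge2$), $U_{(n,m)}$ ($m\ge3,n\ge2$) or $V_{8m}$ ($m\ge2$), then $\Gamma_G$ is L-integral; more generally, if $G/Z(G)\cong D_{2m}$ for some $m\ge3$, then $\Gamma_G$ is L-integral; (3) if $G\cong D_{2m}$, $T_{4m}$, $SD_{8m}$ or $U_{(n,m)}$ ($n\ge2$) with $m\ge3$ odd, then $\Gamma_G$ is Q-integral; (4) if $G\cong D_{2m}$ or $U_{(n,m)}$ ($n\ge2$) with $m$ even and $m/2$ odd, then $\Gamma_G$ is Q-integral.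
   Context: Groups: $D_{2m}=\langle x,y\mid x^m=y^2=1,\ yxy^{-1}=x^{-1}\rangle$; $T_{4m}=\langle x,y\mid x^{2m}=1,\ x^m=y^2,\ y^{-1}xy=x^{-1}\rangle$; $SD_{8m}=\langle x,y\mid x^{4m}=y^2=1,\ yxy=x^{2m-1}\rangle$; $U_{(n,m)}=\langle x,y\mid x^{2n}=y^m=1,\ x^{-1}yx=y^{-1}\rangle$; $U_{6m}=\langle x,y\mid x^{2m}=y^3=1,\ x^{-1}yx=y^{-1}\rangle$; $V_{8m}=\langle x,y\mid x^{2m}=y^4=1,\ yx=x^{-1}y^{-1},\ y^{-1}x=x^{-1}y\rangle$. The NCCC-graph $\Gamma_G$ of a finite non-abelian group $G$ has vertex set $\{x^G: x\in G\setminus Z(G)\}$ ($x^G$ the conjugacy class of $x$), distinct vertices $x^G,y^G$ adjacent iff $x'y'\neq y'x'$ for all $x'\in x^G,y'\in y^G$. With $A$ the adjacency matrix and $D$ the degree matrix, a graph is integral (resp. L-integral, Q-integral) if all eigenvalues of $A$ (resp. $L=D-A$, $Q=D+A$) are integers. *)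

theory Defs
  imports "HOL-Algebra.Algebra" Complex_Main
begin

definition grp_center :: "('a, 'b) monoid_scheme \<Rightarrow> 'a set" where
  "grp_center G = {z \<in> carrier G. \<forall>g \<in> carrier G. z \<otimes>\<^bsub>G\<^esub> g = g \<otimes>\<^bsub>G\<^esub> z}"

definition conj_class :: "('a, 'b) monoid_scheme \<Rightarrow> 'a \<Rightarrow> 'a set" where
  "conj_class G x = {g \<otimes>\<^bsub>G\<^esub> x \<otimes>\<^bsub>G\<^esub> inv\<^bsub>G\<^esub> g | g. g \<in> carrier G}"

definition nccc_vertices :: "('a, 'b) monoid_scheme \<Rightarrow> 'a set set" where
  "nccc_vertices G = conj_class G ` (carrier G - grp_center G)"

definition nccc_adj :: "('a, 'b) monoid_scheme \<Rightarrow> 'a set \<Rightarrow> 'a set \<Rightarrow> bool" where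
  "nccc_adj G A B \<longleftrightarrow> A \<in> nccc_vertices G \<and> B \<in> nccc_vertices G \<and> A \<noteq> B \<and>
     (\<forall>x \<in> A. \<forall>y \<in> B. x \<otimes>\<^bsub>G\<^esub> y \<noteq> y \<otimes>\<^bsub>G\<^esub> x)"

definition adj_matrix :: "'v set \<Rightarrow> ('v \<Rightarrow> 'v \<Rightarrow> bool) \<Rightarrow> 'v \<Rightarrow> 'v \<Rightarrow> complex" where
  "adj_matrix V E i j = (if E i j then 1 else 0)"

definition degree_matrix :: "'v set \<Rightarrow> ('v \<Rightarrow> 'v \<Rightarrow> bool) \<Rightarrow> 'v \<Rightarrow> 'v \<Rightarrow> complex" where
  "degree_matrix V E i j = (if i = j then of_nat (card {k \<in> V. E i k}) else 0)"

definition laplacian_matrix :: "'v set \<Rightarrow> ('v \<Rightarrow> 'v \<Rightarrow> bool) \<Rightarrow> 'v \<Rightarrow> 'v \<Rightarrow> complex" where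
  "laplacian_matrix V E i j = degree_matrix V E i j - adj_matrix V E i j"

definition signless_laplacian_matrix :: "'v set \<Rightarrow> ('v \<Rightarrow> 'v \<Rightarrow> bool) \<Rightarrow> 'v \<Rightarrow> 'v \<Rightarrow> complex" where
  "signless_laplacian_matrix V E i j = degree_matrix V E i j + adj_matrix V E i j"

definition is_eigenvalue :: "'v set \<Rightarrow> ('v \<Rightarrow> 'v \<Rightarrow> complex) \<Rightarrow> complex \<Rightarrow> bool" where
  "is_eigenvalue V M \<mu> \<longleftrightarrow> (\<exists>v :: 'v \<Rightarrow> complex. (\<exists>i \<in> V. v i \<noteq> 0) \<and>
      (\<forall>i \<in> V. (\<Sum>j \<in> V. M i j * v j) = \<mu> * v i))"

definition all_eigenvalues_integral :: "'v set \<Rightarrow> ('v \<Rightarrow> 'v \<Rightarrow> complex) \<Rightarrow> bool" where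
  "all_eigenvalues_integral V M \<longleftrightarrow> (\<forall>\<mu>. is_eigenvalue V M \<mu> \<longrightarrow> \<mu> \<in> \<int>)"

definition graph_integral :: "'v set \<Rightarrow> ('v \<Rightarrow> 'v \<Rightarrow> bool) \<Rightarrow> bool" where
  "graph_integral V E \<longleftrightarrow> all_eigenvalues_integral V (adj_matrix V E)"

definition graph_L_integral :: "'v set \<Rightarrow> ('v \<Rightarrow> 'v \<Rightarrow> bool) \<Rightarrow> bool" where
  "graph_L_integral V E \<longleftrightarrow> all_eigenvalues_integral V (laplacian_matrix V E)"

definition graph_Q_integral :: "'v set \<Rightarrow> ('v \<Rightarrow> 'v \<Rightarrow> bool) \<Rightarrow> bool" where
  "graph_Q_integral V E \<longleftrightarrow> all_eigenvalues_integral V (signless_laplacian_matrix V E)"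

text \<open>G is (isomorphic to) the group presented by generators x, y and relations R:
  G is generated by elements x, y satisfying R, and G has the universal property of the
  presentation: whenever elements a, b of a group H satisfy R there is a homomorphism
  G \<rightarrow> H sending x to a and y to b. Test groups H are taken with carrier in nat; since
  every countable group (in particular every finitely generated one) embeds in such
  an H, this is exactly the universal property. The relations are passed twice, once at
  the type of G and once at the type nat.\<close>
definition presented2 ::
  "('a, 'c) monoid_scheme \<Rightarrow> (('a, 'c) monoid_scheme \<Rightarrow> 'a \<Rightarrow> 'a \<Rightarrow> bool)
     \<Rightarrow> (nat monoid \<Rightarrow> nat \<Rightarrow> nat \<Rightarrow> bool) \<Rightarrow> bool" where
  "presented2 G R RN \<longleftrightarrow> (\<exists>x \<in> carrier G. \<exists>y \<in> carrier G.
      generate G {x, y} = carrier G \<and> R G x y \<and>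
      (\<forall>(H :: nat monoid) a b. group H \<and> a \<in> carrier H \<and> b \<in> carrier H \<and> RN H a b \<longrightarrow>
          (\<exists>h \<in> hom G H. h x = a \<and> h y = b)))"

definition D_rel :: "nat \<Rightarrow> ('a, 'c) monoid_scheme \<Rightarrow> 'a \<Rightarrow> 'a \<Rightarrow> bool" where
  "D_rel m H x y \<longleftrightarrow> x [^]\<^bsub>H\<^esub> m = \<one>\<^bsub>H\<^esub> \<and> y [^]\<^bsub>H\<^esub> (2::nat) = \<one>\<^bsub>H\<^esub> \<and>
     y \<otimes>\<^bsub>H\<^esub> x \<otimes>\<^bsub>H\<^esub> inv\<^bsub>H\<^esub> y = inv\<^bsub>H\<^esub> x"

definition T_rel :: "nat \<Rightarrow> ('a, 'c) monoid_scheme \<Rightarrow> 'a \<Rightarrow> 'a \<Rightarrow> bool" where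
  "T_rel m H x y \<longleftrightarrow> x [^]\<^bsub>H\<^esub> (2 * m) = \<one>\<^bsub>H\<^esub> \<and> x [^]\<^bsub>H\<^esub> m = y [^]\<^bsub>H\<^esub> (2::nat) \<and>
     inv\<^bsub>H\<^esub> y \<otimes>\<^bsub>H\<^esub> x \<otimes>\<^bsub>H\<^esub> y = inv\<^bsub>H\<^esub> x"

definition SD_rel :: "nat \<Rightarrow> ('a, 'c) monoid_scheme \<Rightarrow> 'a \<Rightarrow> 'a \<Rightarrow> bool" where
  "SD_rel m H x y \<longleftrightarrow> x [^]\<^bsub>H\<^esub> (4 * m) = \<one>\<^bsub>H\<^esub> \<and> y [^]\<^bsub>H\<^esub> (2::nat) = \<one>\<^bsub>H\<^esub> \<and>
     y \<otimes>\<^bsub>H\<^esub> x \<otimes>\<^bsub>H\<^esub> y = x [^]\<^bsub>H\<^esub> (2 * m - 1)"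

definition U_rel :: "nat \<Rightarrow> nat \<Rightarrow> ('a, 'c) monoid_scheme \<Rightarrow> 'a \<Rightarrow> 'a \<Rightarrow> bool" where
  "U_rel n m H x y \<longleftrightarrow> x [^]\<^bsub>H\<^esub> (2 * n) = \<one>\<^bsub>H\<^esub> \<and> y [^]\<^bsub>H\<^esub> m = \<one>\<^bsub>H\<^esub> \<and>
     inv\<^bsub>H\<^esub> x \<otimes>\<^bsub>H\<^esub> y \<otimes>\<^bsub>H\<^esub> x = inv\<^bsub>H\<^esub> y"

definition U6_rel :: "nat \<Rightarrow> ('a, 'c) monoid_scheme \<Rightarrow> 'a \<Rightarrow> 'a \<Rightarrow> bool" where
  "U6_rel m H x y \<longleftrightarrow> x [^]\<^bsub>H\<^esub> (2 * m) = \<one>\<^bsub>H\<^esub> \<and> y [^]\<^bsub>H\<^esub> (3::nat) = \<one>\<^bsub>H\<^esub> \<and>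
     inv\<^bsub>H\<^esub> x \<otimes>\<^bsub>H\<^esub> y \<otimes>\<^bsub>H\<^esub> x = inv\<^bsub>H\<^esub> y"

definition V_rel :: "nat \<Rightarrow> ('a, 'c) monoid_scheme \<Rightarrow> 'a \<Rightarrow> 'a \<Rightarrow> bool" where
  "V_rel m H x y \<longleftrightarrow> x [^]\<^bsub>H\<^esub> (2 * m) = \<one>\<^bsub>H\<^esub> \<and> y [^]\<^bsub>H\<^esub> (4::nat) = \<one>\<^bsub>H\<^esub> \<and>
     y \<otimes>\<^bsub>H\<^esub> x = inv\<^bsub>H\<^esub> x \<otimes>\<^bsub>H\<^esub> inv\<^bsub>H\<^esub> y \<and>
     inv\<^bsub>H\<^esub> y \<otimes>\<^bsub>H\<^esub> x = inv\<^bsub>H\<^esub> x \<otimes>\<^bsub>H\<^esub> y"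

definition iso_D :: "('a, 'c) monoid_scheme \<Rightarrow> nat \<Rightarrow> bool" where
  "iso_D G m \<longleftrightarrow> presented2 G (D_rel m) (D_rel m)"
definition iso_T :: "('a, 'c) monoid_scheme \<Rightarrow> nat \<Rightarrow> bool" where
  "iso_T G m \<longleftrightarrow> presented2 G (T_rel m) (T_rel m)"
definition iso_SD :: "('a, 'c) monoid_scheme \<Rightarrow> nat \<Rightarrow> bool" where
  "iso_SD G m \<longleftrightarrow> presented2 G (SD_rel m) (SD_rel m)"
definition iso_U :: "('a, 'c) monoid_scheme \<Rightarrow> nat \<Rightarrow> nat \<Rightarrow> bool" where
  "iso_U G n m \<longleftrightarrow> presented2 G (U_rel n m) (U_rel n m)"
definition iso_U6 :: "('a, 'c) monoid_scheme \<Rightarrow> nat \<Rightarrow> bool" where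
  "iso_U6 G m \<longleftrightarrow> presented2 G (U6_rel m) (U6_rel m)"
definition iso_V :: "('a, 'c) monoid_scheme \<Rightarrow> nat \<Rightarrow> bool" where
  "iso_V G m \<longleftrightarrow> presented2 G (V_rel m) (V_rel m)"

end

(*
  Every group in the statement is a CA-group: commuting is transitive on non-central
  elements. Then "some conjugates commute" is an equivalence relation on non-central
  conjugacy classes and the NCCC-graph is the complete multipartite graph whose parts are
  its equivalence classes. In a complete multipartite graph an eigenvector for a
  non-integral eigenvalue is constant on each part and then vanishes. This works for the
  Laplacian in general, for the adjacency and signless Laplacian matrices when all parts
  have the same size, and for the signless Laplacian when there are at most two parts.

  The presented groups and the groups with dihedral central quotient contain an abelian
  subgroup A of index two, which forces transitivity of commuting. The non-central classes
  in A form one part. Under the parity conditions every element outside A is conjugate to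
  t z for a fixed t and central z, so the classes outside A form the only other part; for
  U_6m both parts have |Z(G)| vertices. If G/Z(G) is Z_p x Z_p, the centralizer of every
  non-central element has order p |Z(G)|, so commuting non-central elements have equal
  centralizers and every part consists of (p - 1) |Z(G)| / p classes of size p.
*)
theory Submission
  imports Defs
begin

section \<open>Integral spectra of complete multipartite graphs\<close>

lemma all_eigenvalues_integralI:
  assumes "\<And>\<mu> v i. \<mu> \<notin> \<int> \<Longrightarrow> \<forall>j\<in>V. (\<Sum>k\<in>V. M j k * v k) = \<mu> * v j
             \<Longrightarrow> i \<in> V \<Longrightarrow> v i = 0"
  shows "all_eigenvalues_integral V M"
  using assms unfolding all_eigenvalues_integral_def is_eigenvalue_def by blast

lemma eigen_equation_uniform_vanishes:
  fixes v :: "'v \<Rightarrow> complex"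
  assumes "finite V" and \<mu>: "\<mu> \<notin> \<int>" and k: "k \<in> \<int>" and c: "c \<in> \<int>"
    and eq: "\<And>j. j \<in> V \<Longrightarrow> (\<mu> - k) * v j = c * (\<Sum>l\<in>V. v l)"
    and i: "i \<in> V"
  shows "v i = 0"
proof -
  define S where "S = (\<Sum>l\<in>V. v l)"
  have nonzero: "\<mu> - a \<noteq> 0" if "a \<in> \<int>" for a
    using \<mu> that by (metis eq_iff_diff_eq_0)
  have "(\<mu> - k) * S = (\<Sum>j\<in>V. (\<mu> - k) * v j)"
    by (simp add: S_def sum_distrib_left)
  also have "\<dots> = of_nat (card V) * c * S"
    using eq by (simp add: S_def)
  finally have "(\<mu> - (k + of_nat (card V) * c)) * S = 0"
    by (simp add: algebra_simps)
  hence "S = 0"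
    using nonzero k c by simp
  thus ?thesis
    using eq[OF i] nonzero[OF k] by (simp add: S_def)
qed

locale complete_multipartite =
  fixes V :: "'v set" and R :: "'v \<Rightarrow> 'v \<Rightarrow> bool" and E :: "'v \<Rightarrow> 'v \<Rightarrow> bool"
  assumes finite_V: "finite V"
    and R_refl: "i \<in> V \<Longrightarrow> R i i"
    and R_sym: "R i j \<Longrightarrow> R j i"
    and R_trans: "i \<in> V \<Longrightarrow> j \<in> V \<Longrightarrow> k \<in> V \<Longrightarrow> R i j \<Longrightarrow> R j k \<Longrightarrow> R i k"
    and E_iff: "E i j \<longleftrightarrow> i \<in> V \<and> j \<in> V \<and> i \<noteq> j \<and> \<not> R i j"
begin

definition part :: "'v \<Rightarrow> 'v set" where
  "part i = {j \<in> V. R i j}"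

lemma part_subset: "part i \<subseteq> V"
  by (auto simp: part_def)

lemma finite_part: "finite (part i)"
  using finite_V part_subset by (rule finite_subset[rotated])

lemma part_eq: "i \<in> V \<Longrightarrow> j \<in> part i \<Longrightarrow> part j = part i"
  unfolding part_def using R_sym R_trans by blast

lemma adj_matrix_mult:
  assumes "i \<in> V"
  shows "(\<Sum>j\<in>V. adj_matrix V E i j * v j) = (\<Sum>j\<in>V. v j) - (\<Sum>j\<in>part i. v j)"
proof -
  have "(\<Sum>j\<in>V. adj_matrix V E i j * v j) = (\<Sum>j\<in>V - part i. v j)"
    using assms finite_V
    by (intro sum.mono_neutral_cong_right) (auto simp: adj_matrix_def E_iff part_def R_refl)
  also have "\<dots> = (\<Sum>j\<in>V. v j) - (\<Sum>j\<in>part i. v j)"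
    by (rule sum_diff[OF finite_V part_subset])
  finally show ?thesis .
qed

lemma degree_matrix_mult:
  assumes "i \<in> V"
  shows "(\<Sum>j\<in>V. degree_matrix V E i j * v j) = (of_nat (card V) - of_nat (card (part i))) * v i"
proof -
  have "{k \<in> V. E i k} = V - part i"
    using assms by (auto simp: E_iff part_def R_refl)
  hence "card {k \<in> V. E i k} = card V - card (part i)"
    by (simp add: card_Diff_subset finite_part part_subset)
  moreover have "card (part i) \<le> card V"
    by (rule card_mono[OF finite_V part_subset])
  ultimately show ?thesis
    using assms finite_V by (simp add: degree_matrix_def if_distrib[of "\<lambda>x. x * _"] cong: if_cong)
qed

lemma laplacian_matrix_mult:
  "i \<in> V \<Longrightarrow> (\<Sum>j\<in>V. laplacian_matrix V E i j * v j) =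
    (of_nat (card V) - of_nat (card (part i))) * v i - ((\<Sum>j\<in>V. v j) - (\<Sum>j\<in>part i. v j))"
  by (simp add: laplacian_matrix_def left_diff_distrib sum_subtractf degree_matrix_mult adj_matrix_mult)

lemma signless_laplacian_matrix_mult:
  "i \<in> V \<Longrightarrow> (\<Sum>j\<in>V. signless_laplacian_matrix V E i j * v j) =
    (of_nat (card V) - of_nat (card (part i))) * v i + ((\<Sum>j\<in>V. v j) - (\<Sum>j\<in>part i. v j))"
  by (simp add: signless_laplacian_matrix_def distrib_right sum.distrib degree_matrix_mult adj_matrix_mult)

lemma eigenvector_part_sum:
  fixes v :: "'v \<Rightarrow> complex" and a :: "'v \<Rightarrow> int"
  assumes \<mu>: "\<mu> \<notin> \<int>"
    and eq: "\<And>j. j \<in> V \<Longrightarrow> \<mu> * v j = of_int (a j) * v j + c * ((\<Sum>l\<in>V. v l) - (\<Sum>l\<in>part j. v l))"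
    and a: "\<And>j. j \<in> V \<Longrightarrow> a j = a' (part j)"
    and i: "i \<in> V"
  shows "(\<Sum>j\<in>part i. v j) = of_nat (card (part i)) * v i"
proof -
  \<comment> \<open>As \<open>\<mu>\<close> is not an integer, \<open>v j\<close> is determined by the part of \<open>j\<close>.\<close>
  have solve: "v j = c * ((\<Sum>l\<in>V. v l) - (\<Sum>l\<in>part j. v l)) / (\<mu> - of_int (a' (part j)))"
    if "j \<in> V" for j
  proof -
    have "\<mu> - of_int (a' (part j)) \<noteq> 0"
      using \<mu> by (metis Ints_of_int eq_iff_diff_eq_0)
    thus ?thesis
      using eq[OF that] a[OF that] by (simp add: field_simps)
  qed
  have "v j = v i" if "j \<in> part i" for j
    using solve[OF i] solve[of j] that part_subset part_eq[OF i that] by auto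
  thus ?thesis
    by simp
qed

theorem laplacian_integral: "all_eigenvalues_integral V (laplacian_matrix V E)"
proof (rule all_eigenvalues_integralI)
  fix \<mu> v i
  assume \<mu>: "\<mu> \<notin> \<int>" and i: "i \<in> V"
    and ev: "\<forall>j\<in>V. (\<Sum>k\<in>V. laplacian_matrix V E j k * v k) = \<mu> * v j"
  have eq: "\<mu> * v j = of_int (int (card V) - int (card (part j))) * v j
      + (-1) * ((\<Sum>l\<in>V. v l) - (\<Sum>l\<in>part j. v l))" if "j \<in> V" for j
    using ev[rule_format, OF that] laplacian_matrix_mult[OF that, of v] by (simp add: algebra_simps)
  have uniform: "(\<mu> - of_nat (card V)) * v j = (-1) * (\<Sum>l\<in>V. v l)" if "j \<in> V" for j
    using eq[OF that] eigenvector_part_sum[OF \<mu> eq _ that, of "\<lambda>P. int (card V) - int (card P)"]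
    by (simp add: algebra_simps)
  show "v i = 0"
    by (rule eigen_equation_uniform_vanishes[OF finite_V \<mu> _ _ uniform i]) simp_all
qed

lemma signless_laplacian_eigenvector:
  fixes v :: "'v \<Rightarrow> complex"
  assumes \<mu>: "\<mu> \<notin> \<int>"
    and ev: "\<forall>j\<in>V. (\<Sum>k\<in>V. signless_laplacian_matrix V E j k * v k) = \<mu> * v j"
    and j: "j \<in> V"
  shows "(\<Sum>l\<in>part j. v l) = of_nat (card (part j)) * v j"
    and "(\<mu> - of_nat (card V) + 2 * of_nat (card (part j))) * v j = (\<Sum>l\<in>V. v l)"
proof -
  have eq: "\<mu> * v j = of_int (int (card V) - int (card (part j))) * v j
      + 1 * ((\<Sum>l\<in>V. v l) - (\<Sum>l\<in>part j. v l))" if "j \<in> V" for j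
    using ev[rule_format, OF that] signless_laplacian_matrix_mult[OF that, of v] by (simp add: algebra_simps)
  show part_sum: "(\<Sum>l\<in>part j. v l) = of_nat (card (part j)) * v j"
    using eigenvector_part_sum[OF \<mu> eq _ j, of "\<lambda>P. int (card V) - int (card P)"] by simp
  show "(\<mu> - of_nat (card V) + 2 * of_nat (card (part j))) * v j = (\<Sum>l\<in>V. v l)"
    using eq[OF j] part_sum by (simp add: algebra_simps)
qed

theorem signless_laplacian_integral_equal_parts:
  assumes s: "\<And>i. i \<in> V \<Longrightarrow> card (part i) = s"
  shows "all_eigenvalues_integral V (signless_laplacian_matrix V E)"
proof (rule all_eigenvalues_integralI)
  fix \<mu> v i
  assume \<mu>: "\<mu> \<notin> \<int>" and i: "i \<in> V"
    and ev: "\<forall>j\<in>V. (\<Sum>k\<in>V. signless_laplacian_matrix V E j k * v k) = \<mu> * v j"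
  have uniform: "(\<mu> - (of_nat (card V) - 2 * of_nat s)) * v j = 1 * (\<Sum>l\<in>V. v l)" if "j \<in> V" for j
    using signless_laplacian_eigenvector(2)[OF \<mu> ev that] s[OF that] by (simp add: algebra_simps)
  show "v i = 0"
    by (rule eigen_equation_uniform_vanishes[OF finite_V \<mu> _ _ uniform i]) simp_all
qed

theorem adjacency_integral_equal_parts:
  assumes s: "\<And>i. i \<in> V \<Longrightarrow> card (part i) = s"
  shows "all_eigenvalues_integral V (adj_matrix V E)"
proof (rule all_eigenvalues_integralI)
  fix \<mu> v i
  assume \<mu>: "\<mu> \<notin> \<int>" and i: "i \<in> V"
    and ev: "\<forall>j\<in>V. (\<Sum>k\<in>V. adj_matrix V E j k * v k) = \<mu> * v j"
  have eq: "\<mu> * v j = of_int 0 * v j + 1 * ((\<Sum>l\<in>V. v l) - (\<Sum>l\<in>part j. v l))" if "j \<in> V" for j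
    using ev[rule_format, OF that] adj_matrix_mult[OF that, of v] by simp
  have uniform: "(\<mu> - (- of_nat s)) * v j = 1 * (\<Sum>l\<in>V. v l)" if "j \<in> V" for j
    using eq[OF that] eigenvector_part_sum[OF \<mu> eq _ that, of "\<lambda>_. 0"] s[OF that]
    by (simp add: algebra_simps)
  show "v i = 0"
    by (rule eigen_equation_uniform_vanishes[OF finite_V \<mu> _ _ uniform i]) simp_all
qed

lemma part_complement:
  assumes two: "\<And>i j k. i \<in> V \<Longrightarrow> j \<in> V \<Longrightarrow> k \<in> V \<Longrightarrow> R i j \<or> R j k \<or> R i k"
    and i: "i \<in> V" and j: "j \<in> V" "j \<notin> part i"
  shows "part j = V - part i"
proof -
  have "k \<in> part j \<longleftrightarrow> k \<notin> part i" if "k \<in> V" for k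
    using two[OF i j(1) that] j that R_sym[of i k] R_sym[of j k] R_trans[OF i that j(1)]
    by (auto simp: part_def)
  thus ?thesis
    using part_subset by blast
qed

lemma signless_laplacian_eigenvector_two_parts:
  fixes v :: "'v \<Rightarrow> complex"
  assumes \<mu>: "\<mu> \<notin> \<int>"
    and ev: "\<forall>j\<in>V. (\<Sum>k\<in>V. signless_laplacian_matrix V E j k * v k) = \<mu> * v j"
    and i: "i \<in> V" and j: "j \<in> V" and part_j: "part j = V - part i"
  shows "v i = 0"
proof -
  note part_sum = signless_laplacian_eigenvector(1)[OF \<mu> ev]
    and eq = signless_laplacian_eigenvector(2)[OF \<mu> ev]
  define a where "a = card (part i)"
  define b where "b = card (part j)"
  have n: "card V = a + b"
    using part_j card_Diff_subset[OF finite_part part_subset] card_mono[OF finite_V part_subset]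
    by (simp add: a_def b_def)
  have "(\<Sum>l\<in>V. v l) = (\<Sum>l\<in>part i. v l) + (\<Sum>l\<in>part j. v l)"
    using part_j sum.subset_diff[OF part_subset finite_V, of v i] by (simp add: add.commute)
  hence S: "(\<Sum>l\<in>V. v l) = of_nat a * v i + of_nat b * v j"
    using part_sum[OF i] part_sum[OF j] by (simp add: a_def b_def)
  have ei: "(\<mu> - of_nat b) * v i = of_nat b * v j"
    using eq[OF i] n S by (simp add: a_def algebra_simps)
  have ej: "(\<mu> - of_nat a) * v j = of_nat a * v i"
    using eq[OF j] n S by (simp add: b_def algebra_simps)
  have "(\<mu> - of_nat (card V)) * (v i + v j) = 0"
    using ei ej n by (simp add: algebra_simps)
  moreover have "\<mu> \<noteq> of_nat (card V)"
    using \<mu> by auto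
  ultimately have "v j = - v i"
    by (simp add: add_eq_0_iff)
  hence "\<mu> * v i = 0"
    using ei by (simp add: algebra_simps)
  moreover have "\<mu> \<noteq> 0"
    using \<mu> by auto
  ultimately show ?thesis
    by simp
qed

theorem signless_laplacian_integral_two_parts:
  assumes two: "\<And>i j k. i \<in> V \<Longrightarrow> j \<in> V \<Longrightarrow> k \<in> V \<Longrightarrow> R i j \<or> R j k \<or> R i k"
  shows "all_eigenvalues_integral V (signless_laplacian_matrix V E)"
proof (rule all_eigenvalues_integralI)
  fix \<mu> v i
  assume \<mu>: "\<mu> \<notin> \<int>" and i: "i \<in> V"
    and ev: "\<forall>j\<in>V. (\<Sum>k\<in>V. signless_laplacian_matrix V E j k * v k) = \<mu> * v j"
  show "v i = 0"
  proof (cases "V \<subseteq> part i")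
    case True
    hence "part i = V"
      using part_subset by blast
    hence "\<mu> * v i = 0"
      using signless_laplacian_eigenvector[OF \<mu> ev i] by (simp add: algebra_simps)
    moreover have "\<mu> \<noteq> 0"
      using \<mu> by auto
    ultimately show ?thesis
      by simp
  next
    case False
    then obtain j where j: "j \<in> V" "j \<notin> part i"
      by blast
    show ?thesis
      by (rule signless_laplacian_eigenvector_two_parts[OF \<mu> ev i j(1) part_complement[OF two i j]])
  qed
qed

end

section \<open>Centralizers and conjugacy classes\<close>

definition classes_commute :: "('a, 'b) monoid_scheme \<Rightarrow> 'a set \<Rightarrow> 'a set \<Rightarrow> bool" where
  "classes_commute G K L \<longleftrightarrow> (\<exists>x\<in>K. \<exists>y\<in>L. x \<otimes>\<^bsub>G\<^esub> y = y \<otimes>\<^bsub>G\<^esub> x)"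

definition commute_transitive :: "('a, 'b) monoid_scheme \<Rightarrow> bool" where
  "commute_transitive G \<longleftrightarrow>
    (\<forall>u \<in> carrier G - grp_center G. \<forall>v \<in> carrier G - grp_center G. \<forall>w \<in> carrier G - grp_center G.
      u \<otimes>\<^bsub>G\<^esub> v = v \<otimes>\<^bsub>G\<^esub> u \<longrightarrow> v \<otimes>\<^bsub>G\<^esub> w = w \<otimes>\<^bsub>G\<^esub> v \<longrightarrow> u \<otimes>\<^bsub>G\<^esub> w = w \<otimes>\<^bsub>G\<^esub> u)"

definition centralizer :: "('a, 'b) monoid_scheme \<Rightarrow> 'a \<Rightarrow> 'a set" where
  "centralizer G x = {g \<in> carrier G. g \<otimes>\<^bsub>G\<^esub> x = x \<otimes>\<^bsub>G\<^esub> g}"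

context group
begin

lemma inv_mult_cancel_left [simp]: "x \<in> carrier G \<Longrightarrow> y \<in> carrier G \<Longrightarrow> inv x \<otimes> (x \<otimes> y) = y"
  by (simp add: m_assoc[symmetric])

lemma mult_inv_cancel_left [simp]: "x \<in> carrier G \<Longrightarrow> y \<in> carrier G \<Longrightarrow> x \<otimes> (inv x \<otimes> y) = y"
  by (simp add: m_assoc[symmetric])

lemma grp_center_subset: "grp_center G \<subseteq> carrier G"
  by (auto simp: grp_center_def)

lemma grp_centerD: "z \<in> grp_center G \<Longrightarrow> g \<in> carrier G \<Longrightarrow> z \<otimes> g = g \<otimes> z"
  by (auto simp: grp_center_def)

lemma grp_centerI: "z \<in> carrier G \<Longrightarrow> (\<And>g. g \<in> carrier G \<Longrightarrow> z \<otimes> g = g \<otimes> z) \<Longrightarrow> z \<in> grp_center G"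
  by (auto simp: grp_center_def)

lemma centralizer_eq_stabilizer:
  assumes x: "x \<in> carrier G"
  shows "centralizer G x = stabilizer G (\<lambda>g. \<lambda>h\<in>carrier G. g \<otimes> h \<otimes> inv g) x"
proof -
  have "g \<otimes> x \<otimes> inv g = x \<longleftrightarrow> g \<otimes> x = x \<otimes> g" if "g \<in> carrier G" for g
    using that x by (metis inv_solve_right m_closed)
  thus ?thesis
    using x by (auto simp: stabilizer_def centralizer_def)
qed

lemma centralizer_subgroup: "x \<in> carrier G \<Longrightarrow> subgroup (centralizer G x) G"
  unfolding centralizer_eq_stabilizer
  by (rule group_action.stabilizer_subgroup[OF action_by_conjugation])

lemma centralizer_sym:
  "x \<in> carrier G \<Longrightarrow> y \<in> carrier G \<Longrightarrow> x \<in> centralizer G y \<longleftrightarrow> y \<in> centralizer G x"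
  by (auto simp: centralizer_def)

lemma centralizer_eq_carrier_iff:
  assumes "x \<in> carrier G"
  shows "centralizer G x = carrier G \<longleftrightarrow> x \<in> grp_center G"
proof -
  have "(\<forall>g\<in>carrier G. g \<otimes> x = x \<otimes> g) \<longleftrightarrow> (\<forall>g\<in>carrier G. x \<otimes> g = g \<otimes> x)"
    by metis
  thus ?thesis
    using assms unfolding centralizer_def grp_center_def by blast
qed

lemma grp_center_eq_Inter_centralizers: "grp_center G = \<Inter> (centralizer G ` carrier G)"
  by (auto simp: grp_center_def centralizer_def)

lemma grp_center_subgroup: "subgroup (grp_center G) G"
  unfolding grp_center_eq_Inter_centralizers
  by (rule subgroups_Inter) (auto intro: centralizer_subgroup)

lemma grp_center_normal: "grp_center G \<lhd> G"
proof (rule normal_invI[OF grp_center_subgroup])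
  fix g z assume g: "g \<in> carrier G" and z: "z \<in> grp_center G"
  hence "g \<otimes> z \<otimes> inv g = z"
    using grp_center_subset by (simp add: grp_centerD[OF z g, symmetric] m_assoc subset_iff)
  thus "g \<otimes> z \<otimes> inv g \<in> grp_center G"
    using z by simp
qed

lemma center_quotient_hom: "group_hom G (G Mod grp_center G) (\<lambda>g. grp_center G #> g)"
  using normal.factorgroup_is_group[OF grp_center_normal] normal.r_coset_hom_Mod[OF grp_center_normal]
  by (intro group_hom.intro group_hom_axioms.intro is_group)

lemma grp_center_subset_centralizer: "x \<in> carrier G \<Longrightarrow> grp_center G \<subseteq> centralizer G x"
  by (auto simp: centralizer_def grp_center_def)

lemma card_subgroup_dvd:
  assumes H: "subgroup H G" and K: "subgroup K G" and "H \<subseteq> K"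
  shows "card H dvd card K"
proof -
  have "card (rcosets\<^bsub>G\<lparr>carrier := K\<rparr>\<^esub> H) * card H = card K"
    using group.lagrange[OF subgroup.subgroup_is_group[OF K is_group] subgroup_incl[OF assms]]
    by (simp add: order_def)
  thus ?thesis
    by (metis dvd_triv_right)
qed

lemma abelian_generate:
  assumes S: "S \<subseteq> carrier G" and comm: "\<And>a b. a \<in> S \<Longrightarrow> b \<in> S \<Longrightarrow> a \<otimes> b = b \<otimes> a"
    and a: "a \<in> generate G S" and b: "b \<in> generate G S"
  shows "a \<otimes> b = b \<otimes> a"
proof -
  have gen_in_centralizer: "generate G S \<subseteq> centralizer G s" if "s \<in> carrier G" "S \<subseteq> centralizer G s" for s
    using that by (intro generate_subgroup_incl centralizer_subgroup)
  have a_carrier: "a \<in> carrier G"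
    using a generate_incl[OF S] by blast
  have "a \<in> centralizer G s" if "s \<in> S" for s
    using gen_in_centralizer[of s] S comm that a by (auto simp: centralizer_def)
  hence "S \<subseteq> centralizer G a"
    using S a_carrier centralizer_sym by blast
  thus ?thesis
    using gen_in_centralizer[OF a_carrier] b by (auto simp: centralizer_def)
qed

lemma central_if_commutes_with_generators:
  assumes "generate G S = carrier G" "S \<subseteq> carrier G" "z \<in> carrier G"
    and "\<And>s. s \<in> S \<Longrightarrow> s \<otimes> z = z \<otimes> s"
  shows "z \<in> grp_center G"
proof -
  have "generate G S \<subseteq> centralizer G z"
    using assms by (intro generate_subgroup_incl centralizer_subgroup) (auto simp: centralizer_def)
  thus ?thesis
    using assms by (auto simp: grp_center_def centralizer_def)
qed

lemma subgroup_nat_pow_closed: "subgroup H G \<Longrightarrow> h \<in> H \<Longrightarrow> h [^] (n::nat) \<in> H"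
  by (induction n) (auto intro: subgroup.one_closed subgroup.m_closed)

lemma conj_nat_pow:
  assumes "t \<in> carrier G" "x \<in> carrier G"
  shows "inv t \<otimes> x [^] (k::nat) \<otimes> t = (inv t \<otimes> x \<otimes> t) [^] k"
proof (induction k)
  case (Suc k)
  have "inv t \<otimes> x [^] Suc k \<otimes> t = (inv t \<otimes> x [^] k \<otimes> t) \<otimes> (inv t \<otimes> x \<otimes> t)"
    using assms by (simp add: m_assoc)
  thus ?case
    by (simp add: Suc.IH)
qed (use assms in simp)

lemma central_mult_swap:
  assumes z: "z \<in> grp_center G" and carriers: "u \<in> carrier G" "v \<in> carrier G" "y \<in> carrier G"
  shows "(u \<otimes> z) \<otimes> (v \<otimes> y) = (u \<otimes> v) \<otimes> (z \<otimes> y)"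
proof -
  have z_carrier: "z \<in> carrier G"
    using z grp_center_subset by blast
  have "(u \<otimes> z) \<otimes> (v \<otimes> y) = u \<otimes> (z \<otimes> v) \<otimes> y"
    using carriers z_carrier by (simp add: m_assoc)
  also have "\<dots> = (u \<otimes> v) \<otimes> (z \<otimes> y)"
    using carriers z_carrier by (simp add: grp_centerD[OF z] m_assoc)
  finally show ?thesis .
qed

lemma central_translates_commute:
  assumes t: "t \<in> carrier G" and z: "z \<in> grp_center G" and z': "z' \<in> grp_center G"
  shows "(t \<otimes> z) \<otimes> (t \<otimes> z') = (t \<otimes> z') \<otimes> (t \<otimes> z)"
proof -
  have swap: "(t \<otimes> a) \<otimes> (t \<otimes> b) = t \<otimes> t \<otimes> (a \<otimes> b)" if a: "a \<in> grp_center G" and b: "b \<in> carrier G" for a b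
  proof -
    have a_carrier: "a \<in> carrier G"
      using a grp_center_subset by blast
    have "(t \<otimes> a) \<otimes> (t \<otimes> b) = t \<otimes> (a \<otimes> t) \<otimes> b"
      using t a_carrier b by (simp add: m_assoc)
    also have "\<dots> = t \<otimes> t \<otimes> (a \<otimes> b)"
      using t a_carrier b by (simp add: grp_centerD[OF a t] m_assoc)
    finally show ?thesis .
  qed
  have zc: "z \<in> carrier G" "z' \<in> carrier G"
    using z z' grp_center_subset by auto
  show ?thesis
    using swap[OF z zc(2)] swap[OF z' zc(1)] grp_centerD[OF z zc(2)] by simp
qed

lemma conj_classI: "g \<in> carrier G \<Longrightarrow> g \<otimes> x \<otimes> inv g \<in> conj_class G x"
  by (auto simp: conj_class_def)

lemma conj_classE:
  assumes "y \<in> conj_class G x"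
  obtains g where "g \<in> carrier G" "y = g \<otimes> x \<otimes> inv g"
  using assms by (auto simp: conj_class_def)

lemma conj_class_self: "x \<in> carrier G \<Longrightarrow> x \<in> conj_class G x"
  using conj_classI[OF one_closed, of x] by simp

lemma conj_class_eq:
  assumes x: "x \<in> carrier G" and y: "y \<in> conj_class G x"
  shows "conj_class G y = conj_class G x"
proof -
  obtain h where h: "h \<in> carrier G" "y = h \<otimes> x \<otimes> inv h"
    using y by (rule conj_classE)
  show ?thesis
  proof (intro equalityI subsetI)
    fix w assume "w \<in> conj_class G y"
    then obtain g where g: "g \<in> carrier G" "w = g \<otimes> y \<otimes> inv g"
      by (rule conj_classE)
    hence "w = (g \<otimes> h) \<otimes> x \<otimes> inv (g \<otimes> h)"
      using h x by (simp add: m_assoc inv_mult_group)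
    thus "w \<in> conj_class G x"
      using g h conj_classI[of "g \<otimes> h" x] by simp
  next
    fix w assume "w \<in> conj_class G x"
    then obtain g where g: "g \<in> carrier G" "w = g \<otimes> x \<otimes> inv g"
      by (rule conj_classE)
    hence "w = (g \<otimes> inv h) \<otimes> y \<otimes> inv (g \<otimes> inv h)"
      using h x by (simp add: m_assoc inv_mult_group)
    thus "w \<in> conj_class G y"
      using g h conj_classI[of "g \<otimes> inv h" y] by simp
  qed
qed

lemma conj_classes_disjoint:
  assumes "x \<in> carrier G" "y \<in> carrier G" "conj_class G x \<noteq> conj_class G y"
  shows "conj_class G x \<inter> conj_class G y = {}"
proof (rule ccontr)
  assume "conj_class G x \<inter> conj_class G y \<noteq> {}"
  then obtain e where "e \<in> conj_class G x" "e \<in> conj_class G y"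
    by blast
  thus False
    using conj_class_eq[OF assms(1)] conj_class_eq[OF assms(2)] assms(3) by metis
qed

lemma conj_mult:
  "g \<in> carrier G \<Longrightarrow> a \<in> carrier G \<Longrightarrow> b \<in> carrier G \<Longrightarrow>
    (g \<otimes> a \<otimes> inv g) \<otimes> (g \<otimes> b \<otimes> inv g) = g \<otimes> (a \<otimes> b) \<otimes> inv g"
  by (simp add: m_assoc)

lemma conj_commute:
  "g \<in> carrier G \<Longrightarrow> a \<in> carrier G \<Longrightarrow> b \<in> carrier G \<Longrightarrow> a \<otimes> b = b \<otimes> a \<Longrightarrow>
    (g \<otimes> a \<otimes> inv g) \<otimes> (g \<otimes> b \<otimes> inv g) = (g \<otimes> b \<otimes> inv g) \<otimes> (g \<otimes> a \<otimes> inv g)"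
  by (simp add: conj_mult)

lemma conj_noncentral:
  assumes x: "x \<in> carrier G - grp_center G" and g: "g \<in> carrier G"
  shows "g \<otimes> x \<otimes> inv g \<in> carrier G - grp_center G"
proof
  show "g \<otimes> x \<otimes> inv g \<in> carrier G"
    using x g by simp
  show "g \<otimes> x \<otimes> inv g \<notin> grp_center G"
  proof
    assume z: "g \<otimes> x \<otimes> inv g \<in> grp_center G"
    have "x = inv g \<otimes> ((g \<otimes> x \<otimes> inv g) \<otimes> g)"
      using x g by (simp add: m_assoc)
    also have "\<dots> = g \<otimes> x \<otimes> inv g"
      using x g by (simp add: grp_centerD[OF z g])
    finally show False
      using x z by simp
  qed
qed

lemma card_conj_class_centralizer:
  assumes x: "x \<in> carrier G"
  shows "card (conj_class G x) * card (centralizer G x) = order G"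
proof -
  have "orbit G (\<lambda>g. \<lambda>h\<in>carrier G. g \<otimes> h \<otimes> inv g) x = conj_class G x"
    using x by (simp add: orbit_def conj_class_def)
  thus ?thesis
    using group_action.orbit_stabilizer_theorem[OF action_by_conjugation x]
    by (simp only: centralizer_eq_stabilizer[OF x])
qed

lemma card_conj_classes:
  assumes fin: "finite (carrier G)" and U: "U \<subseteq> carrier G"
    and closed: "\<And>g u. g \<in> carrier G \<Longrightarrow> u \<in> U \<Longrightarrow> g \<otimes> u \<otimes> inv g \<in> U"
    and c: "\<And>u. u \<in> U \<Longrightarrow> card (conj_class G u) = c"
  shows "c * card (conj_class G ` U) = card U"
proof -
  have union: "\<Union> (conj_class G ` U) = U"
  proof (intro equalityI subsetI)
    fix w assume "w \<in> \<Union> (conj_class G ` U)"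
    then obtain u where u: "u \<in> U" "w \<in> conj_class G u"
      by blast
    then obtain g where "g \<in> carrier G" "w = g \<otimes> u \<otimes> inv g"
      by (elim conj_classE)
    thus "w \<in> U"
      using closed u(1) by simp
  next
    fix u assume "u \<in> U"
    thus "u \<in> \<Union> (conj_class G ` U)"
      using U conj_class_self by blast
  qed
  have "c * card (conj_class G ` U) = card (\<Union> (conj_class G ` U))"
  proof (rule card_partition)
    show "finite (conj_class G ` U)" "finite (\<Union> (conj_class G ` U))"
      using union finite_subset[OF U fin] by simp_all
    show "card K = c" if "K \<in> conj_class G ` U" for K
      using that c by blast
    show "K \<inter> L = {}" if K: "K \<in> conj_class G ` U" and L: "L \<in> conj_class G ` U" and "K \<noteq> L"
      for K L
    proof -
      obtain u v where "u \<in> U" "v \<in> U" "K = conj_class G u" "L = conj_class G v"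
        using K L by blast
      thus ?thesis
        using conj_classes_disjoint[of u v] U \<open>K \<noteq> L\<close> by blast
    qed
  qed
  thus ?thesis
    using union by simp
qed

section \<open>The NCCC-graph of a group in which commuting is transitive\<close>

lemma nccc_vertexE:
  assumes "K \<in> nccc_vertices G" "w \<in> K"
  shows "w \<in> carrier G - grp_center G" "K = conj_class G w"
proof -
  obtain x where x: "x \<in> carrier G - grp_center G" "K = conj_class G x"
    using assms(1) by (auto simp: nccc_vertices_def)
  have w: "w \<in> conj_class G x"
    using assms(2) x(2) by simp
  then obtain g where g: "g \<in> carrier G" "w = g \<otimes> x \<otimes> inv g"
    by (rule conj_classE)
  show "w \<in> carrier G - grp_center G"
    using conj_noncentral[OF x(1) g(1)] g(2) by simp
  show "K = conj_class G w"
    unfolding x(2) by (rule sym[OF conj_class_eq[OF DiffD1[OF x(1)] w]])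
qed

lemma classes_commute_conj_class_iff:
  assumes x: "x \<in> carrier G" and w: "w \<in> carrier G"
  shows "classes_commute G (conj_class G x) (conj_class G w) \<longleftrightarrow>
    (\<exists>g\<in>carrier G. g \<otimes> w \<otimes> inv g \<in> centralizer G x)"
proof
  assume "classes_commute G (conj_class G x) (conj_class G w)"
  then obtain c d where c: "c \<in> carrier G" and d: "d \<in> carrier G"
    and comm: "(c \<otimes> x \<otimes> inv c) \<otimes> (d \<otimes> w \<otimes> inv d) = (d \<otimes> w \<otimes> inv d) \<otimes> (c \<otimes> x \<otimes> inv c)"
    by (auto simp: classes_commute_def elim!: conj_classE)
  define g where "g = inv c \<otimes> d"
  have g: "g \<in> carrier G"
    using c d by (simp add: g_def)
  have "x \<otimes> (g \<otimes> w \<otimes> inv g) = inv c \<otimes> ((c \<otimes> x \<otimes> inv c) \<otimes> (d \<otimes> w \<otimes> inv d)) \<otimes> c"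
    using c d x w by (simp add: g_def m_assoc inv_mult_group)
  also have "\<dots> = inv c \<otimes> ((d \<otimes> w \<otimes> inv d) \<otimes> (c \<otimes> x \<otimes> inv c)) \<otimes> c"
    by (simp only: comm)
  also have "\<dots> = (g \<otimes> w \<otimes> inv g) \<otimes> x"
    using c d x w by (simp add: g_def m_assoc inv_mult_group)
  finally have "(g \<otimes> w \<otimes> inv g) \<otimes> x = x \<otimes> (g \<otimes> w \<otimes> inv g)"
    by (rule sym)
  thus "\<exists>g\<in>carrier G. g \<otimes> w \<otimes> inv g \<in> centralizer G x"
    using g w by (auto simp: centralizer_def)
next
  assume "\<exists>g\<in>carrier G. g \<otimes> w \<otimes> inv g \<in> centralizer G x"
  then obtain g where g: "g \<in> carrier G" "g \<otimes> w \<otimes> inv g \<in> centralizer G x"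
    by blast
  hence "x \<otimes> (g \<otimes> w \<otimes> inv g) = (g \<otimes> w \<otimes> inv g) \<otimes> x"
    by (simp add: centralizer_def)
  thus "classes_commute G (conj_class G x) (conj_class G w)"
    using conj_class_self[OF x] conj_classI[OF g(1)] unfolding classes_commute_def by blast
qed

lemma classes_commute_sym: "classes_commute G K L \<longleftrightarrow> classes_commute G L K"
  unfolding classes_commute_def by metis

lemma commute_transitiveD:
  "commute_transitive G \<Longrightarrow> u \<in> carrier G - grp_center G \<Longrightarrow> v \<in> carrier G - grp_center G \<Longrightarrow>
    w \<in> carrier G - grp_center G \<Longrightarrow> u \<otimes> v = v \<otimes> u \<Longrightarrow> v \<otimes> w = w \<otimes> v \<Longrightarrow> u \<otimes> w = w \<otimes> u"
  unfolding commute_transitive_def by blast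

lemma classes_commute_trans:
  assumes CT: "commute_transitive G"
    and K: "K \<in> nccc_vertices G" and L: "L \<in> nccc_vertices G" and M: "M \<in> nccc_vertices G"
    and KL: "classes_commute G K L" and LM: "classes_commute G L M"
  shows "classes_commute G K M"
proof -
  obtain k l where k: "k \<in> K" and l: "l \<in> L" and kl: "k \<otimes> l = l \<otimes> k"
    using KL by (auto simp: classes_commute_def)
  obtain l' m where l': "l' \<in> L" and m: "m \<in> M" and lm: "l' \<otimes> m = m \<otimes> l'"
    using LM by (auto simp: classes_commute_def)
  have "l' \<in> conj_class G l"
    using l' nccc_vertexE(2)[OF L l] by simp
  then obtain c where c: "c \<in> carrier G" and l'_eq: "l' = c \<otimes> l \<otimes> inv c"
    by (rule conj_classE)
  have k_nc: "k \<in> carrier G - grp_center G" and l_nc: "l \<in> carrier G - grp_center G"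
    and m_nc: "m \<in> carrier G - grp_center G"
    using nccc_vertexE(1) K L M k l m by blast+
  have "(c \<otimes> k \<otimes> inv c) \<otimes> l' = l' \<otimes> (c \<otimes> k \<otimes> inv c)"
    unfolding l'_eq using kl c k_nc l_nc by (simp add: conj_commute)
  hence "(c \<otimes> k \<otimes> inv c) \<otimes> m = m \<otimes> (c \<otimes> k \<otimes> inv c)"
    using commute_transitiveD[OF CT conj_noncentral[OF k_nc c] _ m_nc] conj_noncentral[OF l_nc c] lm
    unfolding l'_eq by blast
  moreover have "c \<otimes> k \<otimes> inv c \<in> K"
    using nccc_vertexE[OF K k] c by (simp add: conj_classI)
  ultimately show ?thesis
    using m unfolding classes_commute_def by blast
qed

lemma nccc_complete_multipartite:
  assumes "finite (carrier G)" "commute_transitive G"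
  shows "complete_multipartite (nccc_vertices G) (classes_commute G) (nccc_adj G)"
proof
  show "finite (nccc_vertices G)"
    using assms(1) by (simp add: nccc_vertices_def)
  show "classes_commute G K K" if "K \<in> nccc_vertices G" for K
    using that conj_class_self by (auto simp: nccc_vertices_def classes_commute_def)
  show "classes_commute G L K" if "classes_commute G K L" for K L
    using that classes_commute_sym by blast
  show "classes_commute G K M" if "K \<in> nccc_vertices G" "L \<in> nccc_vertices G" "M \<in> nccc_vertices G"
    "classes_commute G K L" "classes_commute G L M" for K L M
    using classes_commute_trans[OF assms(2) that] .
  show "nccc_adj G K L \<longleftrightarrow> K \<in> nccc_vertices G \<and> L \<in> nccc_vertices G \<and> K \<noteq> L \<and> \<not> classes_commute G K L"
    for K L
    by (auto simp: nccc_adj_def classes_commute_def)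
qed

lemma nccc_L_integral:
  assumes "finite (carrier G)" "commute_transitive G"
  shows "graph_L_integral (nccc_vertices G) (nccc_adj G)"
  unfolding graph_L_integral_def
  by (rule complete_multipartite.laplacian_integral[OF nccc_complete_multipartite[OF assms]])

lemma nccc_part_eq:
  assumes fin: "finite (carrier G)" and CT: "commute_transitive G"
    and U: "U \<subseteq> carrier G - grp_center G"
    and iff: "\<And>w. w \<in> carrier G - grp_center G \<Longrightarrow>
       classes_commute G (conj_class G x) (conj_class G w) \<longleftrightarrow> w \<in> U"
  shows "complete_multipartite.part (nccc_vertices G) (classes_commute G) (conj_class G x) = conj_class G ` U"
proof -
  have "K \<in> nccc_vertices G \<and> classes_commute G (conj_class G x) K \<longleftrightarrow> K \<in> conj_class G ` U" for K
  proof
    assume K: "K \<in> nccc_vertices G \<and> classes_commute G (conj_class G x) K"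
    then obtain w where w: "w \<in> carrier G - grp_center G" "K = conj_class G w"
      by (auto simp: nccc_vertices_def)
    hence "w \<in> U"
      using iff[OF w(1)] K by simp
    thus "K \<in> conj_class G ` U"
      using w(2) by blast
  next
    assume "K \<in> conj_class G ` U"
    then obtain w where w: "w \<in> U" "K = conj_class G w"
      by blast
    hence "w \<in> carrier G - grp_center G"
      using U by blast
    thus "K \<in> nccc_vertices G \<and> classes_commute G (conj_class G x) K"
      using iff w by (auto simp: nccc_vertices_def)
  qed
  thus ?thesis
    unfolding complete_multipartite.part_def[OF nccc_complete_multipartite[OF fin CT]] by blast
qed

end

section \<open>Groups with an abelian subgroup of index two\<close>

locale abelian_index_two = group G for G (structure) +
  fixes A :: "'a set"
  assumes A_subgroup: "subgroup A G"
    and A_comm: "a \<in> A \<Longrightarrow> b \<in> A \<Longrightarrow> a \<otimes> b = b \<otimes> a"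
    and index_two: "g \<in> carrier G - A \<Longrightarrow> h \<in> carrier G - A \<Longrightarrow> inv g \<otimes> h \<in> A"
    and nonabelian: "\<exists>x\<in>carrier G. \<exists>y\<in>carrier G. x \<otimes> y \<noteq> y \<otimes> x"
begin

lemma A_subset: "A \<subseteq> carrier G"
  by (rule subgroup.subset[OF A_subgroup])

lemma A_closed: "a \<in> A \<Longrightarrow> b \<in> A \<Longrightarrow> a \<otimes> b \<in> A" "a \<in> A \<Longrightarrow> inv a \<in> A"
  using A_subgroup by (auto intro: subgroup.m_closed subgroup.m_inv_closed)

lemma outside_factor:
  assumes "t \<in> carrier G - A" "g \<in> carrier G - A"
  shows "inv t \<otimes> g \<in> A" "g = t \<otimes> (inv t \<otimes> g)"
  using assms index_two by auto

lemma commutes_with_outside_central: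
  assumes a: "a \<in> A" and t: "t \<in> carrier G - A" and at: "a \<otimes> t = t \<otimes> a"
  shows "a \<in> grp_center G"
proof (rule grp_centerI)
  show a_carrier: "a \<in> carrier G"
    using a A_subset by blast
  fix g assume g: "g \<in> carrier G"
  show "a \<otimes> g = g \<otimes> a"
  proof (cases "g \<in> A")
    case True
    thus ?thesis
      using a A_comm by blast
  next
    case False
    define b where "b = inv t \<otimes> g"
    have b: "b \<in> A" "g = t \<otimes> b"
      using outside_factor[OF t] False g by (auto simp: b_def)
    hence "b \<in> carrier G"
      using A_subset by blast
    hence "a \<otimes> (t \<otimes> b) = (t \<otimes> b) \<otimes> a"
      using a_carrier t at A_comm[OF a b(1)] by (simp add: m_assoc[symmetric]) (simp add: m_assoc)
    thus ?thesis
      using b by simp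
  qed
qed

lemma grp_center_subset_A: "grp_center G \<subseteq> A"
proof
  fix z assume z: "z \<in> grp_center G"
  show "z \<in> A"
  proof (rule ccontr)
    assume "z \<notin> A"
    hence z_out: "z \<in> carrier G - A"
      using z grp_center_subset by blast
    have "g \<in> grp_center G" if g: "g \<in> carrier G" for g
    proof (cases "g \<in> A")
      case True
      thus ?thesis
        using commutes_with_outside_central[OF _ z_out] grp_centerD[OF z] A_subset by auto
    next
      case False
      hence "inv z \<otimes> g \<in> A"
        using outside_factor(1)[OF z_out] g by blast
      hence "inv z \<otimes> g \<in> grp_center G"
        using commutes_with_outside_central[OF _ z_out] grp_centerD[OF z, of "inv z \<otimes> g"] g z_out
        by simp
      hence "z \<otimes> (inv z \<otimes> g) \<in> grp_center G"
        using z subgroup.m_closed[OF grp_center_subgroup] by blast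
      thus ?thesis
        using z_out g by simp
    qed
    thus False
      using nonabelian grp_centerD by blast
  qed
qed

lemma outside_commute_iff:
  assumes g: "g \<in> carrier G - A" and h: "h \<in> carrier G - A"
  shows "g \<otimes> h = h \<otimes> g \<longleftrightarrow> inv g \<otimes> h \<in> grp_center G"
proof
  assume gh: "g \<otimes> h = h \<otimes> g"
  have "(inv g \<otimes> h) \<otimes> g = g \<otimes> (inv g \<otimes> h)"
    using g h by (simp add: m_assoc gh[symmetric])
  thus "inv g \<otimes> h \<in> grp_center G"
    using commutes_with_outside_central[OF outside_factor(1)[OF g h] g] by blast
next
  assume z: "inv g \<otimes> h \<in> grp_center G"
  have "h \<otimes> g = g \<otimes> (inv g \<otimes> h) \<otimes> g"
    using g h by simp
  also have "\<dots> = g \<otimes> ((inv g \<otimes> h) \<otimes> g)"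
    using g h by (intro m_assoc) auto
  also have "\<dots> = g \<otimes> (g \<otimes> (inv g \<otimes> h))"
    by (simp only: grp_centerD[OF z DiffD1[OF g]])
  also have "\<dots> = g \<otimes> h"
    using g h by simp
  finally show "g \<otimes> h = h \<otimes> g"
    by (rule sym)
qed

theorem commute_transitive: "commute_transitive G"
  unfolding commute_transitive_def
proof (intro ballI impI)
  fix u v w
  assume u: "u \<in> carrier G - grp_center G" and v: "v \<in> carrier G - grp_center G"
    and w: "w \<in> carrier G - grp_center G" and uv: "u \<otimes> v = v \<otimes> u" and vw: "v \<otimes> w = w \<otimes> v"
  have same_side: "a \<in> A \<longleftrightarrow> b \<in> A"
    if "a \<in> carrier G - grp_center G" "b \<in> carrier G - grp_center G" "a \<otimes> b = b \<otimes> a" for a b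
    using that commutes_with_outside_central[of a b] commutes_with_outside_central[of b a] by auto
  show "u \<otimes> w = w \<otimes> u"
  proof (cases "u \<in> A")
    case True
    thus ?thesis
      using same_side[OF u v uv] same_side[OF v w vw] A_comm by blast
  next
    case False
    hence out: "u \<in> carrier G - A" "v \<in> carrier G - A" "w \<in> carrier G - A"
      using same_side[OF u v uv] same_side[OF v w vw] u v w by auto
    have "(inv u \<otimes> v) \<otimes> (inv v \<otimes> w) \<in> grp_center G"
      using outside_commute_iff out uv vw subgroup.m_closed[OF grp_center_subgroup] by blast
    moreover have "(inv u \<otimes> v) \<otimes> (inv v \<otimes> w) = inv u \<otimes> w"
      using out by (simp add: m_assoc)
    ultimately show ?thesis
      using outside_commute_iff[OF out(1,3)] by simp
  qed
qed

lemma conj_closed: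
  assumes g: "g \<in> carrier G" and a: "a \<in> A"
  shows "g \<otimes> a \<otimes> inv g \<in> A"
proof (cases "g \<in> A")
  case True
  thus ?thesis
    using a A_closed by blast
next
  case False
  have a_carrier: "a \<in> carrier G"
    using a A_subset by blast
  show ?thesis
  proof (rule ccontr)
    assume "g \<otimes> a \<otimes> inv g \<notin> A"
    hence "inv g \<otimes> (g \<otimes> a \<otimes> inv g) \<in> A"
      using outside_factor(1) g False a_carrier by simp
    hence "a \<otimes> inv g \<in> A"
      using g a_carrier by (simp add: m_assoc)
    hence "inv a \<otimes> (a \<otimes> inv g) \<in> A"
      using A_closed a by blast
    hence "inv g \<in> A"
      using g a_carrier by simp
    hence "inv (inv g) \<in> A"
      using A_closed by blast
    thus False
      using g False by simp
  qed
qed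

lemma conj_mem_iff: "g \<in> carrier G \<Longrightarrow> w \<in> carrier G \<Longrightarrow> g \<otimes> w \<otimes> inv g \<in> A \<longleftrightarrow> w \<in> A"
  using conj_closed[of g w] conj_closed[of "inv g" "g \<otimes> w \<otimes> inv g"] by (auto simp: m_assoc)

lemma generator_outside:
  assumes "generate G (insert t S) = carrier G" "S \<subseteq> A" "t \<in> carrier G"
  shows "t \<notin> A"
proof
  assume "t \<in> A"
  hence "carrier G \<subseteq> A"
    using assms generate_subgroup_incl[OF _ A_subgroup] by (metis insert_subset)
  thus False
    using nonabelian A_comm by blast
qed

lemma centralizer_inside: "a \<in> A - grp_center G \<Longrightarrow> centralizer G a = A"
  using A_comm A_subset commutes_with_outside_central centralizer_sym
  by (fastforce simp: centralizer_def)

lemma centralizer_outside: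
  assumes g: "g \<in> carrier G - A"
  shows "centralizer G g = grp_center G \<union> (grp_center G #> g)"
proof (intro equalityI subsetI)
  fix h assume h: "h \<in> centralizer G g"
  hence h_carrier: "h \<in> carrier G" and hg: "h \<otimes> g = g \<otimes> h"
    by (auto simp: centralizer_def)
  show "h \<in> grp_center G \<union> (grp_center G #> g)"
  proof (cases "h \<in> A")
    case True
    thus ?thesis
      using commutes_with_outside_central[OF _ g hg] by blast
  next
    case False
    hence z: "inv g \<otimes> h \<in> grp_center G"
      using outside_commute_iff[OF g] h_carrier False hg[symmetric] by simp
    have "h = (inv g \<otimes> h) \<otimes> g"
      using grp_centerD[OF z, of g] g h_carrier by simp
    thus ?thesis
      using z unfolding r_coset_def by blast
  qed
next
  fix h assume "h \<in> grp_center G \<union> (grp_center G #> g)"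
  then consider "h \<in> grp_center G" | z where "z \<in> grp_center G" "h = z \<otimes> g"
    unfolding r_coset_def by blast
  thus "h \<in> centralizer G g"
  proof cases
    case 1
    thus ?thesis
      using g grp_center_subset_centralizer by blast
  next
    case 2
    thus ?thesis
      using g grp_centerD[of z g] grp_center_subset by (auto simp: centralizer_def m_assoc)
  qed
qed

lemma classes_commute_inside:
  assumes a: "a \<in> A - grp_center G" and w: "w \<in> carrier G"
  shows "classes_commute G (conj_class G a) (conj_class G w) \<longleftrightarrow> w \<in> A"
  using classes_commute_conj_class_iff[of a w] centralizer_inside[OF a] conj_mem_iff[OF _ w] a w A_subset
  by auto

definition outside_conj_mod_center :: "'a \<Rightarrow> bool" where
  "outside_conj_mod_center t \<longleftrightarrow> t \<in> carrier G - A \<and>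
    (\<forall>h \<in> carrier G - A. \<exists>c\<in>carrier G. \<exists>z\<in>grp_center G. c \<otimes> h \<otimes> inv c = t \<otimes> z)"

lemma classes_commute_outside:
  assumes t: "outside_conj_mod_center t" and g: "g \<in> carrier G - A"
    and w: "w \<in> carrier G - grp_center G"
  shows "classes_commute G (conj_class G g) (conj_class G w) \<longleftrightarrow> w \<notin> A"
proof
  assume "classes_commute G (conj_class G g) (conj_class G w)"
  thus "w \<notin> A"
    using classes_commute_inside[of w g] classes_commute_sym g w by blast
next
  assume "w \<notin> A"
  then obtain c1 z1 c2 z2 where c1: "c1 \<in> carrier G" "z1 \<in> grp_center G" "c1 \<otimes> g \<otimes> inv c1 = t \<otimes> z1"
    and c2: "c2 \<in> carrier G" "z2 \<in> grp_center G" "c2 \<otimes> w \<otimes> inv c2 = t \<otimes> z2"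
    using t g w unfolding outside_conj_mod_center_def by (meson DiffD1 DiffI)
  moreover have "t \<in> carrier G"
    using t by (simp add: outside_conj_mod_center_def)
  ultimately show "classes_commute G (conj_class G g) (conj_class G w)"
    using central_translates_commute conj_classI[of c1 g] conj_classI[of c2 w]
    unfolding classes_commute_def by metis
qed

lemma conj_inv_closed: "t \<in> carrier G \<Longrightarrow> c \<in> A \<Longrightarrow> inv t \<otimes> c \<otimes> t \<in> A"
  using conj_closed[of "inv t" c] by simp

lemma twisted_commutator_closed:
  "t \<in> carrier G \<Longrightarrow> c \<in> A \<Longrightarrow> inv t \<otimes> c \<otimes> t \<otimes> inv c \<in> A"
  using conj_inv_closed A_closed by blast

lemma twisted_commutator_mult:
  assumes t: "t \<in> carrier G" and c: "c \<in> A" and d: "d \<in> A"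
  shows "inv t \<otimes> (c \<otimes> d) \<otimes> t \<otimes> inv (c \<otimes> d)
    = (inv t \<otimes> c \<otimes> t \<otimes> inv c) \<otimes> (inv t \<otimes> d \<otimes> t \<otimes> inv d)"
proof -
  have carriers: "c \<in> carrier G" "d \<in> carrier G" "inv t \<otimes> d \<otimes> t \<otimes> inv d \<in> carrier G"
    using c d t A_subset by auto
  have "inv t \<otimes> (c \<otimes> d) \<otimes> t \<otimes> inv (c \<otimes> d)
      = inv t \<otimes> c \<otimes> t \<otimes> ((inv t \<otimes> d \<otimes> t \<otimes> inv d) \<otimes> inv c)"
    using carriers t by (simp add: m_assoc inv_mult_group)
  also have "(inv t \<otimes> d \<otimes> t \<otimes> inv d) \<otimes> inv c = inv c \<otimes> (inv t \<otimes> d \<otimes> t \<otimes> inv d)"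
    using A_comm twisted_commutator_closed[OF t d] A_closed(2)[OF c] by blast
  finally show ?thesis
    using carriers t by (simp add: m_assoc)
qed

lemma twisted_commutator_inv:
  assumes t: "t \<in> carrier G" and c: "c \<in> A"
  shows "inv t \<otimes> inv c \<otimes> t \<otimes> inv (inv c) = inv (inv t \<otimes> c \<otimes> t \<otimes> inv c)"
proof -
  have "(inv t \<otimes> inv c \<otimes> t \<otimes> inv (inv c)) \<otimes> (inv t \<otimes> c \<otimes> t \<otimes> inv c) = \<one>"
    using twisted_commutator_mult[OF t A_closed(2)[OF c] c] c t A_subset by auto
  thus ?thesis
    using twisted_commutator_closed[OF t] c A_closed(2) A_subset by (metis inv_equality subsetD)
qed

(* Since c \<mapsto> t\<inverse> c t c\<inverse> is a homomorphism of the abelian normal subgroup A, the products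
   of its values with central elements form a subgroup. *)

lemma twisted_commutators_subgroup:
  assumes t: "t \<in> carrier G"
  shows "subgroup {inv t \<otimes> c \<otimes> t \<otimes> inv c \<otimes> z | c z. c \<in> A \<and> z \<in> grp_center G} G"
    (is "subgroup ?Q G")
proof (rule subgroupI)
  show "?Q \<subseteq> carrier G"
    using twisted_commutator_closed[OF t] A_subset grp_center_subset by blast
  have "\<one> = inv t \<otimes> \<one> \<otimes> t \<otimes> inv \<one> \<otimes> \<one>"
    using t by simp
  thus "?Q \<noteq> {}"
    using subgroup.one_closed[OF A_subgroup] subgroup.one_closed[OF grp_center_subgroup] by blast
next
  fix a assume "a \<in> ?Q"
  then obtain c z where c: "c \<in> A" and z: "z \<in> grp_center G" and a: "a = inv t \<otimes> c \<otimes> t \<otimes> inv c \<otimes> z"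
    by blast
  have w: "inv t \<otimes> c \<otimes> t \<otimes> inv c \<in> carrier G"
    using twisted_commutator_closed[OF t c] A_subset by blast
  have z_carrier: "z \<in> carrier G"
    using z grp_center_subset by blast
  have "inv a = inv z \<otimes> inv (inv t \<otimes> c \<otimes> t \<otimes> inv c)"
    using a w z_carrier by (simp add: inv_mult_group)
  also have "\<dots> = inv (inv t \<otimes> c \<otimes> t \<otimes> inv c) \<otimes> inv z"
    using w by (simp add: grp_centerD[OF subgroup.m_inv_closed[OF grp_center_subgroup z]])
  finally have "inv a = inv t \<otimes> inv c \<otimes> t \<otimes> inv (inv c) \<otimes> inv z"
    by (simp only: twisted_commutator_inv[OF t c])
  thus "inv a \<in> ?Q"
    using A_closed(2)[OF c] subgroup.m_inv_closed[OF grp_center_subgroup z] by blast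
next
  fix a b assume "a \<in> ?Q" "b \<in> ?Q"
  then obtain c z d y where c: "c \<in> A" "z \<in> grp_center G" "a = inv t \<otimes> c \<otimes> t \<otimes> inv c \<otimes> z"
    and d: "d \<in> A" "y \<in> grp_center G" "b = inv t \<otimes> d \<otimes> t \<otimes> inv d \<otimes> y"
    by blast
  have "inv t \<otimes> c \<otimes> t \<otimes> inv c \<in> carrier G" "inv t \<otimes> d \<otimes> t \<otimes> inv d \<in> carrier G"
    "y \<in> carrier G"
    using twisted_commutator_closed[OF t] c(1) d(1,2) A_subset grp_center_subset by auto
  hence "a \<otimes> b = inv t \<otimes> c \<otimes> t \<otimes> inv c \<otimes> (inv t \<otimes> d \<otimes> t \<otimes> inv d) \<otimes> (z \<otimes> y)"
    using c(3) d(3) central_mult_swap[OF c(2)] by simp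
  hence "a \<otimes> b = inv t \<otimes> (c \<otimes> d) \<otimes> t \<otimes> inv (c \<otimes> d) \<otimes> (z \<otimes> y)"
    by (simp only: twisted_commutator_mult[OF t c(1) d(1)])
  thus "a \<otimes> b \<in> ?Q"
    using A_closed(1)[OF c(1) d(1)] subgroup.m_closed[OF grp_center_subgroup c(2) d(2)] by blast
qed

(* Writing t\<inverse> h as such a product exhibits h as a conjugate of t z. *)
lemma outside_conj_mod_centerI:
  assumes A_eq: "A = generate G S" and S: "S \<subseteq> carrier G" and t: "t \<in> carrier G - A"
    and gens: "\<And>s. s \<in> S \<Longrightarrow> \<exists>c\<in>A. \<exists>z\<in>grp_center G. s = inv t \<otimes> c \<otimes> t \<otimes> inv c \<otimes> z"
  shows "outside_conj_mod_center t"
proof -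
  have t_carrier: "t \<in> carrier G"
    using t by blast
  have "generate G S \<subseteq> {inv t \<otimes> c \<otimes> t \<otimes> inv c \<otimes> z | c z. c \<in> A \<and> z \<in> grp_center G}"
    using gens by (intro generate_subgroup_incl[OF _ twisted_commutators_subgroup[OF t_carrier]]) blast
  hence twisted: "A \<subseteq> {inv t \<otimes> c \<otimes> t \<otimes> inv c \<otimes> z | c z. c \<in> A \<and> z \<in> grp_center G}"
    by (simp only: A_eq)
  have "\<exists>c\<in>carrier G. \<exists>z\<in>grp_center G. c \<otimes> h \<otimes> inv c = t \<otimes> z" if h: "h \<in> carrier G - A" for h
  proof -
    obtain c z where c: "c \<in> A" and z: "z \<in> grp_center G" and e: "inv t \<otimes> h = inv t \<otimes> c \<otimes> t \<otimes> inv c \<otimes> z"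
      using twisted outside_factor(1)[OF t h] by blast
    have c_carrier: "c \<in> carrier G"
      using c A_subset by blast
    have "inv c \<otimes> h \<otimes> inv (inv c) = inv c \<otimes> (t \<otimes> (inv t \<otimes> h)) \<otimes> c"
      using h c_carrier t_carrier by simp
    also have "\<dots> = inv c \<otimes> (c \<otimes> t \<otimes> inv c \<otimes> z) \<otimes> c"
      using e c_carrier t_carrier z grp_center_subset by (auto simp: m_assoc)
    also have "\<dots> = t \<otimes> z"
      using c_carrier t_carrier z grp_center_subset grp_centerD[OF z, of c] by (auto simp: m_assoc)
    finally show ?thesis
      using c_carrier z by blast
  qed
  thus ?thesis
    using t by (simp add: outside_conj_mod_center_def)
qed

lemma nccc_at_most_two_parts:
  assumes t: "outside_conj_mod_center t"
    and K: "K \<in> nccc_vertices G" and L: "L \<in> nccc_vertices G" and M: "M \<in> nccc_vertices G"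
  shows "classes_commute G K L \<or> classes_commute G L M \<or> classes_commute G K M"
proof -
  have same_side: "classes_commute G (conj_class G k) (conj_class G l)"
    if "k \<in> carrier G - grp_center G" "l \<in> carrier G - grp_center G" "k \<in> A \<longleftrightarrow> l \<in> A" for k l
  proof (cases "k \<in> A")
    case True
    thus ?thesis
      using classes_commute_inside[of k l] that by blast
  next
    case False
    thus ?thesis
      using classes_commute_outside[OF t, of k l] that by blast
  qed
  obtain k l m where "k \<in> carrier G - grp_center G" "K = conj_class G k"
    "l \<in> carrier G - grp_center G" "L = conj_class G l"
    "m \<in> carrier G - grp_center G" "M = conj_class G m"
    using K L M by (auto simp: nccc_vertices_def)
  thus ?thesis
    using same_side by metis
qed

lemma outside_eq_image:
  assumes t: "t \<in> carrier G - A"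
  shows "carrier G - A = (\<otimes>) t ` A"
proof (intro equalityI subsetI)
  fix g assume "g \<in> carrier G - A"
  thus "g \<in> (\<otimes>) t ` A"
    using outside_factor[OF t] by blast
next
  fix g assume "g \<in> (\<otimes>) t ` A"
  then obtain a where a: "a \<in> A" "g = t \<otimes> a"
    by blast
  have "t \<otimes> a \<notin> A"
  proof
    assume "t \<otimes> a \<in> A"
    hence "t \<otimes> a \<otimes> inv a \<in> A"
      using A_closed a(1) by blast
    thus False
      using a(1) t A_subset by (auto simp: m_assoc)
  qed
  thus "g \<in> carrier G - A"
    using a t A_subset by auto
qed

context
  assumes finite_carrier: "finite (carrier G)"
begin

lemma card_centralizer_outside:
  assumes g: "g \<in> carrier G - A"
  shows "card (centralizer G g) = 2 * card (grp_center G)"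
proof -
  have "grp_center G \<inter> (grp_center G #> g) = {}"
  proof -
    have "z \<otimes> g \<notin> grp_center G" if "z \<in> grp_center G" for z
    proof
      assume "z \<otimes> g \<in> grp_center G"
      hence "inv z \<otimes> (z \<otimes> g) \<in> grp_center G"
        using that subgroup.m_closed[OF grp_center_subgroup] subgroup.m_inv_closed[OF grp_center_subgroup]
        by blast
      moreover have "inv z \<otimes> (z \<otimes> g) = g"
        using that g grp_center_subset by auto
      ultimately show False
        using g grp_center_subset_A by auto
    qed
    thus ?thesis
      unfolding r_coset_def by blast
  qed
  moreover have "card (grp_center G #> g) = card (grp_center G)"
    by (rule sym[OF card_rcosets_equal[OF rcosetsI[OF grp_center_subset DiffD1[OF g]] grp_center_subset]])
  moreover have "finite (grp_center G)" "finite (grp_center G #> g)"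
    using finite_subset[OF grp_center_subset finite_carrier] finite_subset[OF r_coset_subset_G finite_carrier]
      grp_center_subset g by auto
  ultimately show ?thesis
    using centralizer_outside[OF g] by (simp add: card_Un_disjoint)
qed

lemma order_eq_twice_card: "order G = 2 * card A"
proof -
  obtain t where t: "t \<in> carrier G - A"
    using nonabelian A_comm by blast
  have "card (carrier G - A) = card ((\<otimes>) t ` A)"
    using outside_eq_image[OF t] by simp
  also have "\<dots> = card A"
    using t A_subset by (intro card_image inj_onI) (auto simp: subset_iff)
  finally show ?thesis
    using card_Diff_subset[OF finite_subset[OF A_subset finite_carrier] A_subset]
      card_mono[OF finite_carrier A_subset]
    by (simp add: order_def)
qed

lemma card_conj_class_inside:
  assumes a: "a \<in> A - grp_center G"
  shows "card (conj_class G a) = 2"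
proof -
  have "card A > 0"
    using finite_subset[OF A_subset finite_carrier] subgroup.one_closed[OF A_subgroup] card_gt_0_iff
    by blast
  thus ?thesis
    using card_conj_class_centralizer[of a] centralizer_inside[OF a] a A_subset
      order_eq_twice_card by auto
qed

lemma card_conj_class_outside:
  assumes g: "g \<in> carrier G - A"
  shows "card (conj_class G g) * card (grp_center G) = card A"
  using card_conj_class_centralizer[of g] card_centralizer_outside[OF g] g
    order_eq_twice_card by simp

theorem nccc_Q_integral:
  assumes "outside_conj_mod_center t"
  shows "graph_Q_integral (nccc_vertices G) (nccc_adj G)"
  unfolding graph_Q_integral_def
  using complete_multipartite.signless_laplacian_integral_two_parts[OF
      nccc_complete_multipartite[OF finite_carrier commute_transitive]]
    nccc_at_most_two_parts[OF assms]
  by blast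

lemma nccc_part_inside:
  assumes "k \<in> A - grp_center G"
  shows "complete_multipartite.part (nccc_vertices G) (classes_commute G) (conj_class G k)
    = conj_class G ` (A - grp_center G)"
  using nccc_part_eq[OF finite_carrier commute_transitive, of "A - grp_center G" k]
    classes_commute_inside[of k] assms A_subset by blast

lemma nccc_part_outside:
  assumes "outside_conj_mod_center t" and "k \<in> carrier G - A"
  shows "complete_multipartite.part (nccc_vertices G) (classes_commute G) (conj_class G k)
    = conj_class G ` (carrier G - A)"
  using nccc_part_eq[OF finite_carrier commute_transitive, of "carrier G - A" k]
    classes_commute_outside[OF assms(1), of k] assms(2) grp_center_subset_A by blast

(* The classes in A - Z(G) have 2 elements and those outside A have |A| / |Z(G)| = 3. *)
theorem nccc_equal_parts:
  assumes t: "outside_conj_mod_center t"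
    and three: "card A = 3 * card (grp_center G)" and K: "K \<in> nccc_vertices G"
  shows "card (complete_multipartite.part (nccc_vertices G) (classes_commute G) K) = card (grp_center G)"
proof -
  have fin_Z: "finite (grp_center G)" and fin_A: "finite A"
    using finite_subset[OF grp_center_subset finite_carrier] finite_subset[OF A_subset finite_carrier] .
  obtain k where k: "k \<in> carrier G - grp_center G" "K = conj_class G k"
    using K by (auto simp: nccc_vertices_def)
  show ?thesis
  proof (cases "k \<in> A")
    case True
    have "2 * card (conj_class G ` (A - grp_center G)) = card (A - grp_center G)"
      using card_conj_classes[OF finite_carrier, of "A - grp_center G" 2] card_conj_class_inside
        conj_closed conj_noncentral A_subset by blast
    moreover have "card (A - grp_center G) = 2 * card (grp_center G)"
      using card_Diff_subset[OF fin_Z grp_center_subset_A] three by simp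
    ultimately show ?thesis
      using nccc_part_inside k True by simp
  next
    case False
    have "card (grp_center G) > 0"
      using fin_Z subgroup.one_closed[OF grp_center_subgroup] card_gt_0_iff by blast
    hence "card (conj_class G g) = 3" if "g \<in> carrier G - A" for g
      using card_conj_class_outside[OF that] three by simp
    hence "3 * card (conj_class G ` (carrier G - A)) = card (carrier G - A)"
      using card_conj_classes[OF finite_carrier, of "carrier G - A" 3] conj_mem_iff by blast
    moreover have "card (carrier G - A) = 3 * card (grp_center G)"
      using card_Diff_subset[OF fin_A A_subset] order_eq_twice_card three by (simp add: order_def)
    ultimately show ?thesis
      using nccc_part_outside[OF t] k False by simp
  qed
qed

end

end

context group
begin

lemma generate_conj_closed:
  assumes S: "S \<subseteq> carrier G" and t: "t \<in> carrier G"
    and conj: "\<And>s. s \<in> S \<Longrightarrow> inv t \<otimes> s \<otimes> t \<in> generate G S"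
    and a: "a \<in> generate G S"
  shows "inv t \<otimes> a \<otimes> t \<in> generate G S"
  using a
proof (induction rule: generate.induct)
  case one
  thus ?case
    using t generate.one by simp
next
  case (incl s)
  thus ?case
    by (rule conj)
next
  case (inv s)
  hence "inv (inv t \<otimes> s \<otimes> t) \<in> generate G S"
    using conj subgroup.m_inv_closed[OF generate_is_subgroup[OF S]] by blast
  thus ?case
    using inv S t by (simp add: inv_mult_group m_assoc subset_iff)
next
  case (eng a b)
  hence "(inv t \<otimes> a \<otimes> t) \<otimes> (inv t \<otimes> b \<otimes> t) \<in> generate G S"
    using subgroup.m_closed[OF generate_is_subgroup[OF S]] by blast
  thus ?case
    using eng generate_incl[OF S] t by (simp add: m_assoc subset_iff)
qed

lemma union_coset_mult_closed:
  assumes S: "S \<subseteq> carrier G" and t: "t \<in> carrier G"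
    and conj: "\<And>s. s \<in> S \<Longrightarrow> inv t \<otimes> s \<otimes> t \<in> generate G S"
    and tt: "t \<otimes> t \<in> generate G S"
    and a: "a \<in> carrier G" "a \<in> generate G S \<or> inv t \<otimes> a \<in> generate G S"
    and b: "b \<in> carrier G" "b \<in> generate G S \<or> inv t \<otimes> b \<in> generate G S"
  shows "a \<otimes> b \<in> generate G S \<or> inv t \<otimes> (a \<otimes> b) \<in> generate G S"
proof -
  have A: "subgroup (generate G S) G"
    by (rule generate_is_subgroup[OF S])
  consider "a \<in> generate G S" "b \<in> generate G S" | "a \<in> generate G S" "inv t \<otimes> b \<in> generate G S"
    | "inv t \<otimes> a \<in> generate G S" "b \<in> generate G S"
    | "inv t \<otimes> a \<in> generate G S" "inv t \<otimes> b \<in> generate G S"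
    using a(2) b(2) by blast
  thus ?thesis
  proof cases
    case 1
    thus ?thesis
      using subgroup.m_closed[OF A] by blast
  next
    case 2
    have "inv t \<otimes> (a \<otimes> b) = (inv t \<otimes> a \<otimes> t) \<otimes> (inv t \<otimes> b)"
      using a b t by (simp add: m_assoc)
    thus ?thesis
      using 2 generate_conj_closed[OF S t conj] subgroup.m_closed[OF A] by simp
  next
    case 3
    have "inv t \<otimes> (a \<otimes> b) = (inv t \<otimes> a) \<otimes> b"
      using a b t by (simp add: m_assoc)
    thus ?thesis
      using 3 subgroup.m_closed[OF A] by simp
  next
    case 4
    have "a \<otimes> b = (t \<otimes> t) \<otimes> (inv t \<otimes> (inv t \<otimes> a) \<otimes> t) \<otimes> (inv t \<otimes> b)"
      using a b t by (simp add: m_assoc)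
    thus ?thesis
      using 4 tt generate_conj_closed[OF S t conj] subgroup.m_closed[OF A] by simp
  qed
qed

lemma generate_insert_cosets:
  assumes S: "S \<subseteq> carrier G" and t: "t \<in> carrier G"
    and conj: "\<And>s. s \<in> S \<Longrightarrow> inv t \<otimes> s \<otimes> t \<in> generate G S"
    and tt: "t \<otimes> t \<in> generate G S"
    and a: "a \<in> generate G (insert t S)"
  shows "a \<in> generate G S \<or> inv t \<otimes> a \<in> generate G S"
  using a
proof (induction rule: generate.induct)
  case one
  thus ?case
    using generate.one[of G S] by blast
next
  case (incl s)
  thus ?case
    using t generate.one[of G S] generate.incl[of s S G] by auto
next
  case (inv s)
  have "inv t \<otimes> inv t = inv (t \<otimes> t)"
    using t by (simp add: inv_mult_group)
  thus ?case
    using inv subgroup.m_inv_closed[OF generate_is_subgroup[OF S]] tt generate.inv[of s S G] by auto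
next
  case (eng a b)
  thus ?case
    using union_coset_mult_closed[OF S t conj tt] generate_incl[of "insert t S"] S t by blast
qed

lemma index_two_generate:
  assumes S: "S \<subseteq> carrier G" and t: "t \<in> carrier G"
    and gen: "generate G (insert t S) = carrier G"
    and conj: "\<And>s. s \<in> S \<Longrightarrow> inv t \<otimes> s \<otimes> t \<in> generate G S"
    and tt: "t \<otimes> t \<in> generate G S"
    and g: "g \<in> carrier G - generate G S" and h: "h \<in> carrier G - generate G S"
  shows "inv g \<otimes> h \<in> generate G S"
proof -
  have "inv t \<otimes> g \<in> generate G S" "inv t \<otimes> h \<in> generate G S"
    using generate_insert_cosets[OF S t conj tt] g h gen by auto
  hence "inv (inv t \<otimes> g) \<otimes> (inv t \<otimes> h) \<in> generate G S"
    using subgroup.m_closed[OF generate_is_subgroup[OF S]] subgroup.m_inv_closed[OF generate_is_subgroup[OF S]]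
    by blast
  thus ?thesis
    using g h t by (simp add: inv_mult_group m_assoc)
qed

lemma abelian_index_twoI:
  assumes nonabelian: "\<exists>x\<in>carrier G. \<exists>y\<in>carrier G. x \<otimes> y \<noteq> y \<otimes> x"
    and S: "S \<subseteq> carrier G" and comm: "\<And>a b. a \<in> S \<Longrightarrow> b \<in> S \<Longrightarrow> a \<otimes> b = b \<otimes> a"
    and t: "t \<in> carrier G" and gen: "generate G (insert t S) = carrier G"
    and conj: "\<And>s. s \<in> S \<Longrightarrow> inv t \<otimes> s \<otimes> t \<in> generate G S"
    and tt: "t \<otimes> t \<in> generate G S"
  shows "abelian_index_two G (generate G S)"
proof (intro abelian_index_two.intro abelian_index_two_axioms.intro is_group)
  show "subgroup (generate G S) G"
    by (rule generate_is_subgroup[OF S])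
  show "a \<otimes> b = b \<otimes> a" if "a \<in> generate G S" "b \<in> generate G S" for a b
    by (rule abelian_generate[OF S comm that])
  show "inv g \<otimes> h \<in> generate G S" if "g \<in> carrier G - generate G S" "h \<in> carrier G - generate G S" for g h
    by (rule index_two_generate[OF S t gen conj tt that])
qed (rule nonabelian)

end

section \<open>Groups generated by an element and an element inverting it\<close>

(* D_2m and T_4m are of this form with t = y, and U_(n,m) and U_6m with the roles of x and y
   exchanged. *)
locale inverting_pair = group G for G (structure) +
  fixes x t :: 'a
  assumes x_carrier [simp]: "x \<in> carrier G" and t_carrier [simp]: "t \<in> carrier G"
    and generated: "generate G {x, t} = carrier G"
    and inverts: "inv t \<otimes> x \<otimes> t = inv x"
begin

lemma conj_pow: "inv t \<otimes> x [^] (k::nat) \<otimes> t = inv (x [^] k)"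
  by (simp add: conj_nat_pow inverts nat_pow_inv)

lemma t_sq_central: "t \<otimes> t \<in> grp_center G"
proof (rule central_if_commutes_with_generators[OF generated])
  have "x \<otimes> t = t \<otimes> (inv t \<otimes> x \<otimes> t)"
    by (simp add: m_assoc)
  hence xt: "x \<otimes> t = t \<otimes> inv x"
    by (simp add: inverts)
  have "inv x \<otimes> t = t \<otimes> inv (inv t \<otimes> x \<otimes> t)"
    by (simp add: m_assoc inv_mult_group)
  hence "inv x \<otimes> t = t \<otimes> x"
    by (simp add: inverts)
  hence "x \<otimes> (t \<otimes> t) = t \<otimes> t \<otimes> x"
    using xt by (simp add: m_assoc[symmetric]) (simp add: m_assoc)
  thus "s \<otimes> (t \<otimes> t) = t \<otimes> t \<otimes> s" if "s \<in> {x, t}" for s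
    using that by (auto simp: m_assoc)
qed auto

lemma power_central:
  assumes "x [^] (2 * j) = \<one>"
  shows "x [^] (j::nat) \<in> grp_center G"
proof (rule central_if_commutes_with_generators[OF generated])
  have "x [^] j \<otimes> x [^] j = \<one>"
    using assms by (simp add: nat_pow_mult mult_2)
  hence "inv (x [^] j) = x [^] j"
    by (simp add: inv_equality)
  hence "inv t \<otimes> x [^] j \<otimes> t = x [^] j"
    by (simp add: conj_pow)
  hence "t \<otimes> (inv t \<otimes> x [^] j \<otimes> t) = t \<otimes> x [^] j"
    by simp
  hence "x [^] j \<otimes> t = t \<otimes> x [^] j"
    by (simp add: m_assoc)
  moreover have "x \<otimes> x [^] j = x [^] j \<otimes> x"
    using nat_pow_comm[of x 1 j] by simp
  ultimately show "s \<otimes> x [^] j = x [^] j \<otimes> s" if "s \<in> {x, t}" for s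
    using that by auto
qed auto

abbreviation A :: "'a set" where
  "A \<equiv> generate G {x, t \<otimes> t}"

lemma generate_insert_t: "generate G (insert t {x, t \<otimes> t}) = carrier G"
proof
  show "generate G (insert t {x, t \<otimes> t}) \<subseteq> carrier G"
    by (rule generate_incl) simp
  show "carrier G \<subseteq> generate G (insert t {x, t \<otimes> t})"
    using mono_generate[of "{x, t}" "insert t {x, t \<otimes> t}"] generated by auto
qed

context
  assumes nonabelian: "\<exists>a\<in>carrier G. \<exists>b\<in>carrier G. a \<otimes> b \<noteq> b \<otimes> a"
begin

lemma A_abelian_index_two: "abelian_index_two G A"
proof (rule abelian_index_twoI[OF nonabelian _ _ t_carrier generate_insert_t])
  show "{x, t \<otimes> t} \<subseteq> carrier G"
    by simp
  show "a \<otimes> b = b \<otimes> a" if "a \<in> {x, t \<otimes> t}" "b \<in> {x, t \<otimes> t}" for a b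
    using that grp_centerD[OF t_sq_central] by auto
  show "inv t \<otimes> s \<otimes> t \<in> A" if "s \<in> {x, t \<otimes> t}" for s
    using that generate.inv[of x "{x, t \<otimes> t}" G] generate.incl[of "t \<otimes> t" "{x, t \<otimes> t}" G]
    by (auto simp: inverts m_assoc)
  show "t \<otimes> t \<in> A"
    by (rule generate.incl) simp
qed

interpretation abelian_index_two G A
  by (rule A_abelian_index_two)

lemma t_outside: "t \<in> carrier G - A"
  using generator_outside[OF generate_insert_t] generate.incl[of _ "{x, t \<otimes> t}" G] by auto

lemma outside_conj_t:
  assumes central: "x [^] (2 * k + 1 :: nat) \<in> grp_center G"
  shows "outside_conj_mod_center t"
proof (rule outside_conj_mod_centerI[OF refl _ t_outside])
  show "{x, t \<otimes> t} \<subseteq> carrier G"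
    by simp
  fix s assume "s \<in> {x, t \<otimes> t}"
  then consider "s = x" | "s = t \<otimes> t"
    by blast
  thus "\<exists>c\<in>A. \<exists>z\<in>grp_center G. s = inv t \<otimes> c \<otimes> t \<otimes> inv c \<otimes> z"
  proof cases
    case 1
    have "x [^] k \<in> A"
      using subgroup_nat_pow_closed[OF A_subgroup] generate.incl[of x "{x, t \<otimes> t}" G] by simp
    moreover have "x = inv t \<otimes> x [^] k \<otimes> t \<otimes> inv (x [^] k) \<otimes> x [^] (2 * k + 1)"
      by (simp add: conj_pow m_assoc nat_pow_mult[symmetric] mult_2)
    ultimately show ?thesis
      using 1 central by blast
  next
    case 2
    have "t \<otimes> t = inv t \<otimes> \<one> \<otimes> t \<otimes> inv \<one> \<otimes> (t \<otimes> t)"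
      by simp
    thus ?thesis
      using 2 t_sq_central subgroup.one_closed[OF A_subgroup] by blast
  qed
qed

lemma x_noncentral: "x \<notin> grp_center G"
proof
  assume "x \<in> grp_center G"
  hence "a \<otimes> b = b \<otimes> a" if "a \<in> {x, t}" "b \<in> {x, t}" for a b
    using that grp_centerD by auto
  hence "a \<otimes> b = b \<otimes> a" if "a \<in> carrier G" "b \<in> carrier G" for a b
    using abelian_generate[of "{x, t}" a b] that generated by simp
  thus False
    using nonabelian by blast
qed

context
  assumes x3: "x [^] (3::nat) = \<one>"
begin

lemma x_mult_x: "x \<otimes> x = inv x"
  using x3 by (simp add: numeral_3_eq_3 inv_equality)

lemma powers_mult_closed: "u \<in> {\<one>, x, inv x} \<Longrightarrow> v \<in> {\<one>, x, inv x} \<Longrightarrow> u \<otimes> v \<in> {\<one>, x, inv x}"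
  using x_mult_x by (auto simp: inv_mult_group[symmetric])

lemma powers_central: "u \<in> {\<one>, x, inv x} \<Longrightarrow> u \<in> grp_center G \<Longrightarrow> u = \<one>"
  using x_noncentral subgroup.m_inv_closed[OF grp_center_subgroup, of "inv x"] by auto

lemma card_powers: "card {\<one>, x, inv x} = 3"
proof -
  have "x \<noteq> \<one>" "inv x \<noteq> \<one>"
    using x_noncentral subgroup.one_closed[OF grp_center_subgroup] by auto
  moreover have "x \<noteq> inv x"
  proof
    assume "x = inv x"
    hence "inv x = \<one>"
      using x_mult_x by (metis inv_closed x_carrier r_inv)
    thus False
      using \<open>inv x \<noteq> \<one>\<close> by simp
  qed
  ultimately have "\<one> \<notin> {x, inv x}" "x \<notin> {inv x}"
    by (auto dest: sym)
  thus ?thesis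
    using card_insert_disjoint[of "{x, inv x}" "\<one>"] card_insert_disjoint[of "{inv x}" x] by simp
qed

lemma A_eq_products: "A = (\<lambda>(u, z). u \<otimes> z) ` ({\<one>, x, inv x} \<times> grp_center G)"
proof (intro equalityI subsetI)
  have product: "u \<otimes> z \<in> (\<lambda>(u, z). u \<otimes> z) ` ({\<one>, x, inv x} \<times> grp_center G)"
    if "u \<in> {\<one>, x, inv x}" "z \<in> grp_center G" for u z
    using that by (intro image_eqI[of _ _ "(u, z)"]) auto
  have one_central: "\<one> \<in> grp_center G"
    by (rule subgroup.one_closed[OF grp_center_subgroup])
  fix a assume "a \<in> A"
  thus "a \<in> (\<lambda>(u, z). u \<otimes> z) ` ({\<one>, x, inv x} \<times> grp_center G)"
  proof (induction rule: generate.induct)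
    case one
    thus ?case
      using product[of "\<one>" "\<one>"] one_central by simp
  next
    case (incl s)
    hence "s = x \<or> s = t \<otimes> t"
      by simp
    thus ?case
      using product[of x "\<one>"] product[of "\<one>" "t \<otimes> t"] one_central t_sq_central by (elim disjE) simp_all
  next
    case (inv s)
    hence "s = x \<or> s = t \<otimes> t"
      by simp
    thus ?case
      using product[of "inv x" "\<one>"] product[of "\<one>" "inv (t \<otimes> t)"] one_central
        subgroup.m_inv_closed[OF grp_center_subgroup t_sq_central] by (elim disjE) simp_all
  next
    case (eng a b)
    then obtain u z v y where uz: "u \<in> {\<one>, x, inv x}" "z \<in> grp_center G" "a = u \<otimes> z"
      and vy: "v \<in> {\<one>, x, inv x}" "y \<in> grp_center G" "b = v \<otimes> y"
      by auto
    hence "a \<otimes> b = (u \<otimes> v) \<otimes> (z \<otimes> y)"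
      using central_mult_swap[of z u v y] grp_center_subset by auto
    thus ?case
      using uz vy product powers_mult_closed subgroup.m_closed[OF grp_center_subgroup] by simp
  qed
next
  fix a assume "a \<in> (\<lambda>(u, z). u \<otimes> z) ` ({\<one>, x, inv x} \<times> grp_center G)"
  then obtain u z where "u \<in> {\<one>, x, inv x}" "z \<in> grp_center G" "a = u \<otimes> z"
    by auto
  moreover have "{\<one>, x, inv x} \<subseteq> A"
    using generate.one generate.incl[of x "{x, t \<otimes> t}" G] generate.inv[of x "{x, t \<otimes> t}" G] by auto
  ultimately show "a \<in> A"
    using grp_center_subset_A A_closed(1) by blast
qed

lemma inj_on_products: "inj_on (\<lambda>(u, z). u \<otimes> z) ({\<one>, x, inv x} \<times> grp_center G)"
proof (rule inj_onI, clarify)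
  fix u z v y
  assume u: "u \<in> {\<one>, x, inv x}" "z \<in> grp_center G" and v: "v \<in> {\<one>, x, inv x}" "y \<in> grp_center G"
    and eq: "u \<otimes> z = v \<otimes> y"
  have carriers: "u \<in> carrier G" "v \<in> carrier G" "z \<in> carrier G" "y \<in> carrier G"
    using u v grp_center_subset by auto
  have "inv v \<otimes> u = inv v \<otimes> (u \<otimes> z) \<otimes> inv z"
    using carriers by (simp add: m_assoc)
  also have "\<dots> = y \<otimes> inv z"
    using eq carriers by simp
  finally have central: "inv v \<otimes> u \<in> grp_center G"
    using u v subgroup.m_closed[OF grp_center_subgroup] subgroup.m_inv_closed[OF grp_center_subgroup]
    by simp
  have "inv v \<in> {\<one>, x, inv x}"
    using v by auto
  hence "inv v \<otimes> u = \<one>"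
    by (rule powers_central[OF powers_mult_closed[OF _ u(1)] central])
  moreover have "u = v \<otimes> (inv v \<otimes> u)"
    using carriers by simp
  ultimately have "u = v"
    using carriers by simp
  thus "u = v \<and> z = y"
    using eq carriers by simp
qed

lemma card_A_order_three: "card A = 3 * card (grp_center G)"
  using card_image[OF inj_on_products] card_powers by (simp add: A_eq_products card_cartesian_product)

end

theorem nccc_equal_parts_order_three:
  assumes fin: "finite (carrier G)" and x3: "x [^] (3::nat) = \<one>" and K: "K \<in> nccc_vertices G"
  shows "card (complete_multipartite.part (nccc_vertices G) (classes_commute G) K) = card (grp_center G)"
proof -
  have "x [^] (2 * 1 + 1 :: nat) \<in> grp_center G"
    using x3 subgroup.one_closed[OF grp_center_subgroup] by simp
  thus ?thesis
    using nccc_equal_parts[OF fin outside_conj_t card_A_order_three[OF x3] K] by blast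
qed

theorem nccc_Q_integral_inverting:
  assumes "finite (carrier G)" "x [^] (2 * k + 1 :: nat) \<in> grp_center G"
  shows "graph_Q_integral (nccc_vertices G) (nccc_adj G)"
  by (rule nccc_Q_integral[OF assms(1) outside_conj_t[OF assms(2)]])

theorem nccc_Q_integral_power_one:
  assumes fin: "finite (carrier G)" and xm: "x [^] (m::nat) = \<one>" and m: "odd m \<or> odd (m div 2)"
  shows "graph_Q_integral (nccc_vertices G) (nccc_adj G)"
proof -
  obtain j :: nat where j: "odd j" "x [^] j \<in> grp_center G"
  proof (cases "odd m")
    case True
    thus ?thesis
      using that xm subgroup.one_closed[OF grp_center_subgroup] by simp
  next
    case False
    hence "x [^] (2 * (m div 2)) = \<one>"
      using xm by simp
    thus ?thesis
      using that power_central False m by blast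
  qed
  then obtain k where "j = 2 * k + 1"
    by (blast elim: oddE)
  thus ?thesis
    using nccc_Q_integral_inverting[OF fin] j(2) by simp
qed

end

end

section \<open>The presented groups\<close>

lemma (in group_hom) subgroup_preimage:
  assumes K: "subgroup K H"
  shows "subgroup {g \<in> carrier G. h g \<in> K} G"
proof (rule G.subgroupI)
  show "{g \<in> carrier G. h g \<in> K} \<subseteq> carrier G" "{g \<in> carrier G. h g \<in> K} \<noteq> {}"
    using subgroup.one_closed[OF K] by auto
  show "inv a \<in> {g \<in> carrier G. h g \<in> K}" if "a \<in> {g \<in> carrier G. h g \<in> K}" for a
    using that subgroup.m_inv_closed[OF K] by simp
  show "a \<otimes>\<^bsub>G\<^esub> b \<in> {g \<in> carrier G. h g \<in> K}"
    if "a \<in> {g \<in> carrier G. h g \<in> K}" "b \<in> {g \<in> carrier G. h g \<in> K}" for a b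
    using that subgroup.m_closed[OF K] by simp
qed

context group
begin

lemma iso_D_inverting_pair:
  assumes "iso_D G m"
  obtains x t where "inverting_pair G x t" "x [^] m = \<one>"
proof -
  obtain x y where x: "x \<in> carrier G" and y: "y \<in> carrier G" and gen: "generate G {x, y} = carrier G"
    and R: "D_rel m G x y"
    using assms unfolding iso_D_def presented2_def by blast
  have "inv y = y"
    using R y by (simp add: D_rel_def numeral_2_eq_2 inv_equality)
  hence "inv y \<otimes> x \<otimes> y = inv x"
    using R by (simp add: D_rel_def)
  thus ?thesis
    using that[of x y] x y gen R by (simp add: inverting_pair_def inverting_pair_axioms_def is_group D_rel_def)
qed

lemma iso_T_inverting_pair:
  assumes "iso_T G m"
  obtains x t where "inverting_pair G x t" "x [^] m = t \<otimes> t"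
proof -
  obtain x y where x: "x \<in> carrier G" and y: "y \<in> carrier G" and gen: "generate G {x, y} = carrier G"
    and R: "T_rel m G x y"
    using assms unfolding iso_T_def presented2_def by blast
  thus ?thesis
    using that[of x y] by (simp add: inverting_pair_def inverting_pair_axioms_def is_group T_rel_def numeral_2_eq_2)
qed

lemma iso_U_inverting_pair:
  assumes "iso_U G n m"
  obtains x t where "inverting_pair G x t" "x [^] m = \<one>"
proof -
  obtain t x where t: "t \<in> carrier G" and x: "x \<in> carrier G" and gen: "generate G {t, x} = carrier G"
    and R: "U_rel n m G t x"
    using assms unfolding iso_U_def presented2_def by blast
  thus ?thesis
    using that[of x t] by (simp add: inverting_pair_def inverting_pair_axioms_def is_group U_rel_def insert_commute)
qed

lemma iso_U6_inverting_pair: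
  assumes "iso_U6 G m"
  obtains x t where "inverting_pair G x t" "x [^] (3::nat) = \<one>"
proof -
  obtain t x where t: "t \<in> carrier G" and x: "x \<in> carrier G" and gen: "generate G {t, x} = carrier G"
    and R: "U6_rel m G t x"
    using assms unfolding iso_U6_def presented2_def by blast
  thus ?thesis
    using that[of x t] by (simp add: inverting_pair_def inverting_pair_axioms_def is_group U6_rel_def insert_commute)
qed

lemma iso_SD_abelian_index_two:
  assumes nonabelian: "\<exists>a\<in>carrier G. \<exists>b\<in>carrier G. a \<otimes> b \<noteq> b \<otimes> a"
    and x: "x \<in> carrier G" and y: "y \<in> carrier G" and gen: "generate G {x, y} = carrier G"
    and R: "SD_rel m G x y"
  shows "abelian_index_two G (generate G {x})"
proof (rule abelian_index_twoI[OF nonabelian _ _ y])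
  have "inv y = y"
    using R y by (simp add: SD_rel_def numeral_2_eq_2 inv_equality)
  thus "inv y \<otimes> s \<otimes> y \<in> generate G {x}" if "s \<in> {x}" for s
    using that R subgroup_nat_pow_closed[OF generate_is_subgroup generate.incl, of "{x}" x]
    by (simp add: SD_rel_def x)
  show "y \<otimes> y \<in> generate G {x}"
    using R y generate.one by (simp add: SD_rel_def numeral_2_eq_2)
  show "generate G (insert y {x}) = carrier G"
    using gen by (simp add: insert_commute)
qed (use x in auto)

lemma SD_conj_pow:
  assumes x: "x \<in> carrier G" and y: "y \<in> carrier G" and R: "SD_rel m G x y"
  shows "inv y \<otimes> x [^] (k::nat) \<otimes> y = x [^] ((2 * m - 1) * k)"
proof -
  have "inv y = y"
    using R y by (simp add: SD_rel_def numeral_2_eq_2 inv_equality)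
  thus ?thesis
    using R conj_nat_pow[OF y x, of k] by (simp add: SD_rel_def nat_pow_pow x)
qed

lemma SD_power_central:
  assumes x: "x \<in> carrier G" and y: "y \<in> carrier G" and gen: "generate G {x, y} = carrier G"
    and R: "SD_rel m G x y" and m: "odd m"
  shows "x [^] m \<in> grp_center G"
proof (rule central_if_commutes_with_generators[OF gen])
  obtain r where r: "m = 2 * r + 1"
    using m by (blast elim: oddE)
  hence "(2 * m - 1) * m = m + 4 * m * r"
    by (simp add: algebra_simps)
  hence "inv y \<otimes> x [^] m \<otimes> y = x [^] m \<otimes> (x [^] (4 * m)) [^] r"
    using SD_conj_pow[OF x y R, of m] x by (simp add: nat_pow_mult nat_pow_pow)
  hence "y \<otimes> (inv y \<otimes> x [^] m \<otimes> y) = y \<otimes> x [^] m"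
    using R x by (simp add: SD_rel_def)
  hence "y \<otimes> x [^] m = x [^] m \<otimes> y"
    using x y by (simp add: m_assoc)
  thus "s \<otimes> x [^] m = x [^] m \<otimes> s" if "s \<in> {x, y}" for s
    using that nat_pow_comm[OF x, of 1 m] x by auto
qed (use x y in auto)

lemma iso_SD_nccc_Q_integral:
  assumes fin: "finite (carrier G)" and nonabelian: "\<exists>a\<in>carrier G. \<exists>b\<in>carrier G. a \<otimes> b \<noteq> b \<otimes> a"
    and x: "x \<in> carrier G" and y: "y \<in> carrier G" and gen: "generate G {x, y} = carrier G"
    and R: "SD_rel m G x y" and m: "odd m" "m \<ge> 3"
  shows "graph_Q_integral (nccc_vertices G) (nccc_adj G)"
proof -
  interpret abelian_index_two G "generate G {x}"
    by (rule iso_SD_abelian_index_two[OF nonabelian x y gen R])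
  obtain r where r: "m = 2 * r + 1"
    using m(1) by (blast elim: oddE)
  \<comment> \<open>The generator \<open>x\<close> is the twisted commutator of \<open>x [^] r\<close> times a central element.\<close>
  have central: "inv (x [^] (m * (m - 2))) \<in> grp_center G"
    using subgroup_nat_pow_closed[OF grp_center_subgroup SD_power_central[OF x y gen R m(1)], of "m - 2"] x
      subgroup.m_inv_closed[OF grp_center_subgroup] by (simp add: nat_pow_pow)
  have "(2 * m - 1) * r = 1 + m * (m - 2) + r"
    using r m(2) by (cases r) (auto simp: algebra_simps)
  hence "inv y \<otimes> x [^] r \<otimes> y = x [^] (1::nat) \<otimes> x [^] (m * (m - 2)) \<otimes> x [^] r"
    unfolding SD_conj_pow[OF x y R] by (simp only: nat_pow_mult[OF x])
  hence "x = inv y \<otimes> x [^] r \<otimes> y \<otimes> inv (x [^] r) \<otimes> inv (x [^] (m * (m - 2)))"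
    using x by (simp add: m_assoc)
  moreover have "x [^] r \<in> generate G {x}"
    using subgroup_nat_pow_closed[OF A_subgroup generate.incl] by blast
  moreover have "y \<in> carrier G - generate G {x}"
    using generator_outside[of y "{x}"] gen y generate.incl[of x "{x}" G] by (auto simp: insert_commute)
  ultimately have "outside_conj_mod_center y"
    using outside_conj_mod_centerI[of "{x}"] central x by blast
  thus ?thesis
    by (rule nccc_Q_integral[OF fin])
qed

lemma iso_V_abelian_index_two:
  assumes nonabelian: "\<exists>a\<in>carrier G. \<exists>b\<in>carrier G. a \<otimes> b \<noteq> b \<otimes> a"
    and x: "x \<in> carrier G" and y: "y \<in> carrier G" and gen: "generate G {x, y} = carrier G"
    and R: "V_rel m G x y"
  shows "abelian_index_two G (generate G {x, y \<otimes> y})"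
proof (rule abelian_index_twoI[OF nonabelian _ _ y])
  have yxy: "y \<otimes> x \<otimes> y = inv x" and iyxiy: "inv y \<otimes> x \<otimes> inv y = inv x"
    and iyxy: "inv y \<otimes> x \<otimes> y = inv x \<otimes> (y \<otimes> y)"
    using R x y by (simp_all add: V_rel_def m_assoc)
  have "(y \<otimes> y) \<otimes> (y \<otimes> y) = \<one>"
    using R y by (simp add: V_rel_def eval_nat_numeral m_assoc)
  hence inv_yy: "inv (y \<otimes> y) = y \<otimes> y"
    using y by (simp add: inv_equality)
  have "(y \<otimes> y) \<otimes> x \<otimes> (y \<otimes> y) = y \<otimes> (y \<otimes> x \<otimes> y) \<otimes> y"
    using x y by (simp add: m_assoc)
  also have "\<dots> = y \<otimes> (inv y \<otimes> x \<otimes> inv y) \<otimes> y"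
    by (simp only: yxy iyxiy)
  also have "\<dots> = x"
    using x y by (simp add: m_assoc)
  finally have "(y \<otimes> y) \<otimes> x = x \<otimes> inv (y \<otimes> y)"
    using x y by (metis inv_solve_right m_closed)
  hence comm: "(y \<otimes> y) \<otimes> x = x \<otimes> (y \<otimes> y)"
    by (simp add: inv_yy)
  thus "a \<otimes> b = b \<otimes> a" if "a \<in> {x, y \<otimes> y}" "b \<in> {x, y \<otimes> y}" for a b
    using that by auto
  have "inv x \<in> generate G {x, y \<otimes> y}"
    by (rule generate.inv) simp
  moreover have yy: "y \<otimes> y \<in> generate G {x, y \<otimes> y}"
    by (rule generate.incl) simp
  ultimately have "inv x \<otimes> (y \<otimes> y) \<in> generate G {x, y \<otimes> y}"
    by (rule generate.eng)
  thus "inv y \<otimes> s \<otimes> y \<in> generate G {x, y \<otimes> y}" if "s \<in> {x, y \<otimes> y}" for s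
    using that iyxy y yy by (auto simp: m_assoc)
  show "y \<otimes> y \<in> generate G {x, y \<otimes> y}"
    by (rule yy)
  show "generate G (insert y {x, y \<otimes> y}) = carrier G"
    using mono_generate[of "{x, y}" "insert y {x, y \<otimes> y}"] gen generate_incl[of "insert y {x, y \<otimes> y}"] x y
    by auto
qed (use x y in auto)

lemma iso_D_index_two_cyclic:
  assumes "iso_D G m"
  obtains x where "x \<in> carrier G"
    "\<And>g h. g \<in> carrier G - generate G {x} \<Longrightarrow> h \<in> carrier G - generate G {x}
      \<Longrightarrow> inv g \<otimes> h \<in> generate G {x}"
proof -
  obtain x y where x: "x \<in> carrier G" and y: "y \<in> carrier G"
    and gen: "generate G {x, y} = carrier G" and R: "D_rel m G x y"
    using assms unfolding iso_D_def presented2_def by blast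
  have yy: "y \<otimes> y = \<one>"
    using R y by (simp add: D_rel_def numeral_2_eq_2)
  hence "inv y = y"
    using y by (simp add: inv_equality)
  hence conj: "inv y \<otimes> x \<otimes> y \<in> generate G {x}"
    using R generate.inv[of x "{x}" G] by (simp add: D_rel_def)
  have "inv g \<otimes> h \<in> generate G {x}"
    if "g \<in> carrier G - generate G {x}" "h \<in> carrier G - generate G {x}" for g h
  proof (rule index_two_generate[OF _ y _ _ _ that])
    show "{x} \<subseteq> carrier G" "generate G (insert y {x}) = carrier G"
      using x gen by (auto simp: insert_commute)
    show "y \<otimes> y \<in> generate G {x}"
      using yy generate.one by simp
  qed (use conj in blast)
  thus ?thesis
    using that x by blast
qed

lemma abelian_preimage_cyclic_center_quotient:
  assumes xq: "xq \<in> carrier (G Mod grp_center G)"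
    and a: "a \<in> carrier G" "grp_center G #> a \<in> generate (G Mod grp_center G) {xq}"
    and b: "b \<in> carrier G" "grp_center G #> b \<in> generate (G Mod grp_center G) {xq}"
  shows "a \<otimes> b = b \<otimes> a"
proof -
  define Z where "Z = grp_center G"
  define h where "h g = Z #> g" for g
  interpret h: group_hom G "G Mod Z" h
    using center_quotient_hom unfolding Z_def h_def[abs_def] .
  obtain w where w: "w \<in> carrier G" "h w = xq"
    using xq unfolding Z_def h_def carrier_FactGroup by blast
  define B where "B = generate G (insert w Z)"
  have B_gens: "insert w Z \<subseteq> carrier G"
    using w grp_center_subset by (auto simp: Z_def)
  have B_comm: "c \<otimes> d = d \<otimes> c" if "c \<in> B" "d \<in> B" for c d
  proof (rule abelian_generate[OF B_gens _ that[unfolded B_def]])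
    show "c \<otimes> d = d \<otimes> c" if "c \<in> insert w Z" "d \<in> insert w Z" for c d
      using that w grp_centerD[of c d] grp_centerD[of d c] B_gens by (auto simp: Z_def)
  qed
  have "xq \<in> h ` B"
    using w generate.incl[of w "insert w Z" G] by (auto simp: B_def)
  hence gen_xq: "generate (G Mod Z) {xq} \<subseteq> h ` B"
    using h.H.generate_subgroup_incl h.subgroup_img_is_subgroup[OF generate_is_subgroup[OF B_gens]]
    by (simp add: B_def)
  have "g \<in> B" if g: "g \<in> carrier G" "h g \<in> generate (G Mod Z) {xq}" for g
  proof -
    obtain c where c: "c \<in> B" "h g = h c"
      using g gen_xq by auto
    have "g \<in> Z #> g"
      using rcos_self[OF g(1) grp_center_subgroup] by (simp add: Z_def)
    hence "g \<in> Z #> c"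
      using c(2) by (simp add: h_def)
    then obtain z where "z \<in> Z" "g = z \<otimes> c"
      unfolding r_coset_def by blast
    thus "g \<in> B"
      using c(1) generate.incl[of z "insert w Z" G] generate.eng by (simp add: B_def)
  qed
  thus ?thesis
    using a b B_comm by (simp add: h_def Z_def)
qed

lemma quotient_iso_D_abelian_index_two:
  assumes nonabelian: "\<exists>a\<in>carrier G. \<exists>b\<in>carrier G. a \<otimes> b \<noteq> b \<otimes> a"
    and iso: "iso_D (G Mod grp_center G) m"
  shows "\<exists>A. abelian_index_two G A"
proof -
  define Q where "Q = G Mod grp_center G"
  define h where "h g = grp_center G #> g" for g
  interpret h: group_hom G Q h
    using center_quotient_hom unfolding Q_def h_def[abs_def] .
  obtain xq where xq: "xq \<in> carrier Q"
    and index_two_Q: "\<And>U V. U \<in> carrier Q - generate Q {xq} \<Longrightarrow> V \<in> carrier Q - generate Q {xq}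
      \<Longrightarrow> inv\<^bsub>Q\<^esub> U \<otimes>\<^bsub>Q\<^esub> V \<in> generate Q {xq}"
    using h.H.iso_D_index_two_cyclic iso unfolding Q_def by blast
  define A where "A = {g \<in> carrier G. h g \<in> generate Q {xq}}"
  have "abelian_index_two G A"
  proof (intro abelian_index_two.intro abelian_index_two_axioms.intro is_group nonabelian)
    show "subgroup A G"
      unfolding A_def by (rule h.subgroup_preimage[OF h.H.generate_is_subgroup]) (use xq in simp)
    show "a \<otimes> b = b \<otimes> a" if "a \<in> A" "b \<in> A" for a b
      using that abelian_preimage_cyclic_center_quotient[of xq a b] xq by (simp add: A_def Q_def h_def)
    fix g k assume g: "g \<in> carrier G - A" and k: "k \<in> carrier G - A"
    hence "inv\<^bsub>Q\<^esub> (h g) \<otimes>\<^bsub>Q\<^esub> h k \<in> generate Q {xq}"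
      using index_two_Q[of "h g" "h k"] by (simp add: A_def)
    thus "inv g \<otimes> k \<in> A"
      using g k by (simp add: A_def)
  qed
  thus ?thesis
    by blast
qed

end

section \<open>Groups whose central quotient has order p squared\<close>

lemma DirProd_comm_group:
  assumes "comm_group G" "comm_group H"
  shows "comm_group (G \<times>\<times> H)"
proof -
  interpret G: comm_group G by (rule assms(1))
  interpret H: comm_group H by (rule assms(2))
  show ?thesis
  proof (rule group.group_comm_groupI)
    show "group (G \<times>\<times> H)"
      by (simp add: DirProd_group G.is_group H.is_group)
    show "x \<otimes>\<^bsub>G \<times>\<times> H\<^esub> y = y \<otimes>\<^bsub>G \<times>\<times> H\<^esub> x" if "x \<in> carrier (G \<times>\<times> H)" "y \<in> carrier (G \<times>\<times> H)" for x y
      using that by (auto simp: DirProd_def G.m_comm H.m_comm)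
  qed
qed

context group
begin

lemma conj_mod_center_of_comm_quotient:
  assumes comm: "comm_group (G Mod grp_center G)" and c: "c \<in> carrier G" and g: "g \<in> carrier G"
  shows "\<exists>z\<in>grp_center G. c \<otimes> g \<otimes> inv c = z \<otimes> g"
proof -
  define Q where "Q = G Mod grp_center G"
  define h where "h g = grp_center G #> g" for g
  interpret h: group_hom G Q h
    using center_quotient_hom unfolding Q_def h_def[abs_def] .
  interpret Q: comm_group Q
    using comm unfolding Q_def .
  have "h (c \<otimes> g \<otimes> inv c) = h c \<otimes>\<^bsub>Q\<^esub> h g \<otimes>\<^bsub>Q\<^esub> inv\<^bsub>Q\<^esub> (h c)"
    using c g by simp
  also have "\<dots> = h g"
    using c g by (simp add: Q.m_comm[of "h c" "h g"] h.H.m_assoc)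
  finally have "grp_center G #> (c \<otimes> g \<otimes> inv c) = grp_center G #> g"
    by (simp add: h_def)
  moreover have "c \<otimes> g \<otimes> inv c \<in> grp_center G #> (c \<otimes> g \<otimes> inv c)"
    using c g rcos_self[OF _ grp_center_subgroup] by simp
  ultimately show ?thesis
    unfolding r_coset_def by auto
qed

end


locale center_index_prime_square = group G for G (structure) +
  fixes p :: nat
  assumes finite_carrier: "finite (carrier G)" and prime_p: "Factorial_Ring.prime p"
    and comm_quotient: "comm_group (G Mod grp_center G)"
    and card_quotient: "card (carrier (G Mod grp_center G)) = p * p"
begin

lemma finite_center: "finite (grp_center G)"
  using finite_subset[OF grp_center_subset finite_carrier] .

lemma card_center_pos: "card (grp_center G) > 0"
  using finite_center subgroup.one_closed[OF grp_center_subgroup] card_gt_0_iff by blast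

lemma order_eq: "order G = p * p * card (grp_center G)"
  using lagrange[OF grp_center_subgroup] card_quotient by (simp add: FactGroup_def)

lemma card_intermediate_subgroup:
  assumes H: "subgroup H G" and Z_H: "grp_center G \<subseteq> H"
    and "H \<noteq> grp_center G" "H \<noteq> carrier G"
  shows "card H = p * card (grp_center G)"
proof -
  have fin_H: "finite H"
    using finite_subset[OF subgroup.subset[OF H] finite_carrier] .
  obtain k where k: "card H = card (grp_center G) * k"
    using card_subgroup_dvd[OF grp_center_subgroup H Z_H] by blast
  have "card H dvd order G"
    using card_subgroup_dvd[OF H subgroup_self subgroup.subset[OF H]] by (simp add: order_def)
  hence "k dvd p ^ 2"
    using k order_eq card_center_pos by (simp add: power2_eq_square mult.commute)
  then obtain i where "i \<le> 2" "k = p ^ i"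
    using divides_primepow_nat[OF prime_p] by blast
  hence "k = 1 \<or> k = p \<or> k = p * p"
    by (auto simp: le_Suc_eq numeral_2_eq_2)
  moreover have "k \<noteq> 1"
    using k card_subset_eq[OF fin_H Z_H] assms(3) by auto
  moreover have "k \<noteq> p * p"
    using k order_eq card_subset_eq[OF finite_carrier subgroup.subset[OF H]] assms(4)
    by (auto simp: order_def mult.commute)
  ultimately show ?thesis
    using k by auto
qed

lemma card_centralizer:
  assumes x: "x \<in> carrier G - grp_center G"
  shows "card (centralizer G x) = p * card (grp_center G)"
proof (rule card_intermediate_subgroup[OF centralizer_subgroup grp_center_subset_centralizer])
  show "centralizer G x \<noteq> grp_center G"
    using x by (auto simp: centralizer_def)
  show "centralizer G x \<noteq> carrier G"
    using x centralizer_eq_carrier_iff by blast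
qed (use x in auto)

lemma centralizer_eq:
  assumes u: "u \<in> carrier G - grp_center G" and v: "v \<in> carrier G - grp_center G"
    and uv: "u \<otimes> v = v \<otimes> u"
  shows "centralizer G u = centralizer G v"
proof -
  define I where "I = centralizer G u \<inter> centralizer G v"
  have I: "subgroup I G"
    unfolding I_def using u v by (intro subgroups_Inter_pair centralizer_subgroup) auto
  have "u \<in> I"
    using u uv by (auto simp: I_def centralizer_def)
  moreover have "I \<noteq> carrier G"
    using u centralizer_eq_carrier_iff[of u] by (auto simp: I_def centralizer_def)
  ultimately have "card I = p * card (grp_center G)"
    using u v grp_center_subset_centralizer
    by (intro card_intermediate_subgroup[OF I]) (auto simp: I_def)
  hence "I = centralizer G u" "I = centralizer G v"
    using card_centralizer[OF u] card_centralizer[OF v] finite_subset[OF _ finite_carrier]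
      card_subset_eq[of "centralizer G u" I] card_subset_eq[of "centralizer G v" I]
    by (auto simp: I_def centralizer_def)
  thus ?thesis
    by simp
qed

lemma commute_transitive: "commute_transitive G"
  unfolding commute_transitive_def
proof (intro ballI impI)
  fix u v w
  assume u: "u \<in> carrier G - grp_center G" and v: "v \<in> carrier G - grp_center G"
    and w: "w \<in> carrier G - grp_center G" and uv: "u \<otimes> v = v \<otimes> u" and vw: "v \<otimes> w = w \<otimes> v"
  have "w \<in> centralizer G v"
    using w vw by (simp add: centralizer_def)
  hence "w \<in> centralizer G u"
    using centralizer_eq[OF u v uv] by simp
  thus "u \<otimes> w = w \<otimes> u"
    by (simp add: centralizer_def)
qed

lemma centralizer_conj_closed:
  assumes x: "x \<in> carrier G" and w: "w \<in> centralizer G x" and g: "g \<in> carrier G"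
  shows "g \<otimes> w \<otimes> inv g \<in> centralizer G x"
proof -
  have w_carrier: "w \<in> carrier G" and wx: "w \<otimes> x = x \<otimes> w"
    using w by (auto simp: centralizer_def)
  obtain z where z: "z \<in> grp_center G" "g \<otimes> w \<otimes> inv g = z \<otimes> w"
    using conj_mod_center_of_comm_quotient[OF comm_quotient g w_carrier] by blast
  have z_carrier: "z \<in> carrier G"
    using z(1) grp_center_subset by blast
  have "z \<otimes> w \<otimes> x = z \<otimes> (x \<otimes> w)"
    using z_carrier w_carrier x by (simp add: m_assoc wx)
  also have "\<dots> = x \<otimes> (z \<otimes> w)"
    using z_carrier w_carrier x by (simp add: m_assoc[symmetric] grp_centerD[OF z(1) x])
  finally have "z \<otimes> w \<in> centralizer G x"
    using z_carrier w_carrier by (simp add: centralizer_def)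
  thus ?thesis
    using z(2) by simp
qed

lemma card_conj_class:
  assumes w: "w \<in> carrier G - grp_center G"
  shows "card (conj_class G w) = p"
  using card_conj_class_centralizer[of w] card_centralizer[OF w] order_eq
    card_center_pos prime_gt_0_nat[OF prime_p] w
  by (simp add: mult.assoc)

theorem nccc_equal_parts:
  assumes K: "K \<in> nccc_vertices G"
  shows "card (complete_multipartite.part (nccc_vertices G) (classes_commute G) K)
    = (p * card (grp_center G) - card (grp_center G)) div p"
proof -
  obtain x where x: "x \<in> carrier G - grp_center G" and K_eq: "K = conj_class G x"
    using K by (auto simp: nccc_vertices_def)
  define U where "U = centralizer G x - grp_center G"
  have U_closed: "g \<otimes> u \<otimes> inv g \<in> U" if "g \<in> carrier G" "u \<in> U" for g u
    using that centralizer_conj_closed[of x u g] conj_noncentral[of u g] x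
    by (auto simp: U_def centralizer_def)
  have "classes_commute G (conj_class G x) (conj_class G w) \<longleftrightarrow> w \<in> U"
    if "w \<in> carrier G - grp_center G" for w
  proof -
    have "g \<otimes> w \<otimes> inv g \<in> centralizer G x \<longleftrightarrow> w \<in> centralizer G x" if "g \<in> carrier G" for g
      using centralizer_conj_closed[of x w g] centralizer_conj_closed[of x "g \<otimes> w \<otimes> inv g" "inv g"]
        that x \<open>w \<in> carrier G - grp_center G\<close> by (auto simp: m_assoc)
    thus ?thesis
      using classes_commute_conj_class_iff[of x w] x that by (auto simp: U_def)
  qed
  hence "complete_multipartite.part (nccc_vertices G) (classes_commute G) K = conj_class G ` U"
    unfolding K_eq by (intro nccc_part_eq[OF finite_carrier commute_transitive]) (auto simp: U_def centralizer_def)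
  moreover have "p * card (conj_class G ` U) = card U"
    using card_conj_classes[OF finite_carrier _ U_closed card_conj_class] by (auto simp: U_def centralizer_def)
  moreover have "card U = p * card (grp_center G) - card (grp_center G)"
    using card_Diff_subset[OF finite_center grp_center_subset_centralizer] card_centralizer[OF x] x
    by (simp add: U_def)
  ultimately show ?thesis
    using prime_gt_0_nat[OF prime_p] by (metis nonzero_mult_div_cancel_left less_not_refl2)
qed

end

context group
begin

lemma center_index_prime_squareI:
  assumes fin: "finite (carrier G)" and p: "Factorial_Ring.prime p"
    and iso: "G Mod grp_center G \<cong> DirProd (integer_mod_group p) (integer_mod_group p)"
  shows "center_index_prime_square G p"
proof (intro center_index_prime_square.intro center_index_prime_square_axioms.intro is_group fin p)
  have quotient: "group (G Mod grp_center G)"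
    by (rule normal.factorgroup_is_group[OF grp_center_normal])
  have "comm_group (DirProd (integer_mod_group p) (integer_mod_group p))"
    by (simp add: DirProd_comm_group)
  thus "comm_group (G Mod grp_center G)"
    using comm_group.iso_imp_comm_group group.iso_sym[OF quotient iso] quotient
    by (blast intro: group.is_monoid)
  show "card (carrier (G Mod grp_center G)) = p * p"
    using iso_same_card[OF iso] prime_gt_0_nat[OF p]
    by (simp add: carrier_integer_mod_group card_cartesian_product)
qed

section \<open>Integrality of the NCCC-graphs\<close>

lemma nccc_all_integral_equal_parts:
  assumes fin: "finite (carrier G)" and CT: "commute_transitive G"
    and parts: "\<And>K. K \<in> nccc_vertices G \<Longrightarrow>
      card (complete_multipartite.part (nccc_vertices G) (classes_commute G) K) = s"
  shows "graph_integral (nccc_vertices G) (nccc_adj G) \<and> graph_L_integral (nccc_vertices G) (nccc_adj G)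
    \<and> graph_Q_integral (nccc_vertices G) (nccc_adj G)"
  using complete_multipartite.adjacency_integral_equal_parts[OF nccc_complete_multipartite[OF fin CT] parts]
    complete_multipartite.laplacian_integral[OF nccc_complete_multipartite[OF fin CT]]
    complete_multipartite.signless_laplacian_integral_equal_parts[OF nccc_complete_multipartite[OF fin CT] parts]
  by (simp add: graph_integral_def graph_L_integral_def graph_Q_integral_def)

context
  assumes fin: "finite (carrier G)"
    and nonabelian: "\<exists>x\<in>carrier G. \<exists>y\<in>carrier G. x \<otimes> y \<noteq> y \<otimes> x"
begin

lemma nccc_all_integral_center_quotient:
  assumes "Factorial_Ring.prime p"
    and "G Mod grp_center G \<cong> DirProd (integer_mod_group p) (integer_mod_group p)"
  shows "graph_integral (nccc_vertices G) (nccc_adj G) \<and> graph_L_integral (nccc_vertices G) (nccc_adj G)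
    \<and> graph_Q_integral (nccc_vertices G) (nccc_adj G)"
proof -
  interpret center_index_prime_square G p
    by (rule center_index_prime_squareI[OF fin assms])
  show ?thesis
    by (rule nccc_all_integral_equal_parts[OF fin commute_transitive nccc_equal_parts])
qed

lemma nccc_all_integral_U6:
  assumes "iso_U6 G m"
  shows "graph_integral (nccc_vertices G) (nccc_adj G) \<and> graph_L_integral (nccc_vertices G) (nccc_adj G)
    \<and> graph_Q_integral (nccc_vertices G) (nccc_adj G)"
proof -
  obtain x t where pair: "inverting_pair G x t" and x3: "x [^] (3::nat) = \<one>"
    using iso_U6_inverting_pair[OF assms] .
  interpret inverting_pair G x t
    by (rule pair)
  show ?thesis
    using nccc_all_integral_equal_parts[OF fin abelian_index_two.commute_transitive[OF A_abelian_index_two[OF nonabelian]]]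
      nccc_equal_parts_order_three[OF nonabelian fin x3] by blast
qed

lemma abelian_index_two_of_presentation:
  assumes "(\<exists>m. iso_D G m) \<or> (\<exists>m. iso_T G m) \<or> (\<exists>m. iso_SD G m) \<or> (\<exists>n m. iso_U G n m)
    \<or> (\<exists>m. iso_V G m) \<or> (\<exists>m. iso_D (G Mod grp_center G) m)"
  shows "\<exists>A. abelian_index_two G A"
proof -
  have inverting: "\<exists>A. abelian_index_two G A" if "inverting_pair G x t" for x t
    using inverting_pair.A_abelian_index_two[OF that nonabelian] by blast
  show ?thesis
    using assms
  proof (elim disjE exE)
    fix m assume "iso_SD G m"
    thus ?thesis
      using iso_SD_abelian_index_two[OF nonabelian] unfolding iso_SD_def presented2_def by blast
  next
    fix m assume "iso_V G m"
    thus ?thesis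
      using iso_V_abelian_index_two[OF nonabelian] unfolding iso_V_def presented2_def by blast
  next
    fix m assume "iso_D (G Mod grp_center G) m"
    thus ?thesis
      by (rule quotient_iso_D_abelian_index_two[OF nonabelian])
  qed (auto elim: iso_D_inverting_pair iso_T_inverting_pair iso_U_inverting_pair intro: inverting)
qed

lemma nccc_L_integral_of_presentation:
  assumes "(\<exists>m. iso_D G m) \<or> (\<exists>m. iso_T G m) \<or> (\<exists>m. iso_SD G m) \<or> (\<exists>n m. iso_U G n m)
    \<or> (\<exists>m. iso_V G m) \<or> (\<exists>m. iso_D (G Mod grp_center G) m)"
  shows "graph_L_integral (nccc_vertices G) (nccc_adj G)"
  using abelian_index_two_of_presentation[OF assms] nccc_L_integral[OF fin abelian_index_two.commute_transitive]
  by blast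

lemma nccc_Q_integral_of_presentation:
  assumes m: "odd m \<or> odd (m div 2)"
    and pres: "iso_D G m \<or> (\<exists>n. iso_U G n m) \<or> (odd m \<and> iso_T G m) \<or> (odd m \<and> m \<ge> 3 \<and> iso_SD G m)"
  shows "graph_Q_integral (nccc_vertices G) (nccc_adj G)"
  using pres
proof (elim disjE exE conjE)
  assume "iso_D G m"
  then obtain x t where "inverting_pair G x t" "x [^] m = \<one>"
    by (rule iso_D_inverting_pair)
  thus ?thesis
    using inverting_pair.nccc_Q_integral_power_one[OF _ nonabelian fin _ m] by blast
next
  fix n assume "iso_U G n m"
  then obtain x t where "inverting_pair G x t" "x [^] m = \<one>"
    by (rule iso_U_inverting_pair)
  thus ?thesis
    using inverting_pair.nccc_Q_integral_power_one[OF _ nonabelian fin _ m] by blast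
next
  assume "odd m" "iso_T G m"
  then obtain x t k where pair: "inverting_pair G x t" and "x [^] m = t \<otimes> t" and "m = 2 * k + 1"
    by (meson iso_T_inverting_pair oddE)
  hence "x [^] (2 * k + 1) \<in> grp_center G"
    using inverting_pair.t_sq_central[OF pair] by simp
  thus ?thesis
    by (rule inverting_pair.nccc_Q_integral_inverting[OF pair nonabelian fin])
next
  assume "odd m" "m \<ge> 3" "iso_SD G m"
  thus ?thesis
    using iso_SD_nccc_Q_integral[OF fin nonabelian] unfolding iso_SD_def presented2_def by blast
qed

end

end

theorem theorem3p2:
  fixes G :: "('a, 'b) monoid_scheme"
  assumes "group G" and "finite (carrier G)"
    and "\<exists>x \<in> carrier G. \<exists>y \<in> carrier G. x \<otimes>\<^bsub>G\<^esub> y \<noteq> y \<otimes>\<^bsub>G\<^esub> x"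
  shows
   "(((\<exists>p::nat. Factorial_Ring.prime p \<and>
        G Mod (grp_center G) \<cong> DirProd (integer_mod_group p) (integer_mod_group p))
     \<or> (\<exists>m\<ge>2. iso_U6 G m))
    \<longrightarrow> graph_integral (nccc_vertices G) (nccc_adj G)
      \<and> graph_L_integral (nccc_vertices G) (nccc_adj G)
      \<and> graph_Q_integral (nccc_vertices G) (nccc_adj G))
  \<and>
   (((\<exists>m\<ge>3. iso_D G m) \<or> (\<exists>m\<ge>2. iso_T G m) \<or> (\<exists>m\<ge>2. iso_SD G m)
     \<or> (\<exists>n m. m \<ge> 3 \<and> n \<ge> 2 \<and> iso_U G n m) \<or> (\<exists>m\<ge>2. iso_V G m)
     \<or> (\<exists>m\<ge>3. iso_D (G Mod (grp_center G)) m))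
    \<longrightarrow> graph_L_integral (nccc_vertices G) (nccc_adj G))
  \<and>
   ((\<exists>m. m \<ge> 3 \<and> odd m \<and>
        (iso_D G m \<or> iso_T G m \<or> iso_SD G m \<or> (\<exists>n\<ge>2. iso_U G n m)))
    \<longrightarrow> graph_Q_integral (nccc_vertices G) (nccc_adj G))
  \<and>
   ((\<exists>m. even m \<and> odd (m div 2) \<and> (iso_D G m \<or> (\<exists>n\<ge>2. iso_U G n m)))
    \<longrightarrow> graph_Q_integral (nccc_vertices G) (nccc_adj G))"
proof -
  interpret group G
    by (rule assms(1))
  note all_integral = nccc_all_integral_center_quotient[OF assms(2,3)] nccc_all_integral_U6[OF assms(2,3)]
  note L_integral = nccc_L_integral_of_presentation[OF assms(2,3)]
  note Q_integral = nccc_Q_integral_of_presentation[OF assms(2,3)]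
  show ?thesis
  proof (intro conjI impI)
    show "graph_L_integral (nccc_vertices G) (nccc_adj G)"
      if "(\<exists>m\<ge>3. iso_D G m) \<or> (\<exists>m\<ge>2. iso_T G m) \<or> (\<exists>m\<ge>2. iso_SD G m)
        \<or> (\<exists>n m. m \<ge> 3 \<and> n \<ge> 2 \<and> iso_U G n m) \<or> (\<exists>m\<ge>2. iso_V G m)
        \<or> (\<exists>m\<ge>3. iso_D (G Mod grp_center G) m)"
      using that by (intro L_integral) blast
  qed (use all_integral Q_integral in blast)+
qed

end
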